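(* Let $\mu$ be a finite Borel measure on $\Sigma$. (i) Suppose $\mathcal{D}$ is two-dimensional and $S\subseteq\Sigma$ satisfies $\mu(S)>0$ and, for all $\omega\in S$, $\lim_{n\to\infty}R_n(\omega)/n=0$ and $\liminf_{n\to\infty}\frac{\log\mu(B_n(\omega))}{\log\prod_{\nu=1}^n b_{i_\nu}}\ge d$. Then $\dim\Pi(S)\ge d$. (ii) Suppose $S\subseteq\Sigma$ satisfies $\liminf_{n\to\infty}\frac{\log\mu(B_n(\omega))}{\log\prod_{\nu=1}^n b_{i_\nu}}\le d$ for all $\omega\in S$. Then $\dim\Pi(S)\le d$.
   Context: Standing setting (Lalley–Gatzouras system). Let $p\ge 1$ and $m_1,\dots,m_p\ge1$ be integers and $\mathcal{D}=\{(i,j):1\le i\le p,\ 1\le j\le m_i\}$. For $(i,j)\in\mathcal{D}$ let $S_{ij}(x)=\begin{pmatrix}a_{ij}&0\\0&b_i\end{pmatrix}x+\begin{pmatrix}c_{ij}\\ d_i\end{pmatrix}$ on $[0,1]^2$, where $0<a_{ij}\le b_i<1$, $0\le d_1\le\dots\le d_p<1$, $d_{i+1}-d_i\ge b_i$, $b_p+d_p\le 1$, and for each $i$: $0\le c_{i1}\le\dots\le c_{im_i}<1$, $c_{i(j+1)}-c_{ij}\ge a_{ij}$, $a_{im_i}+c_{im_i}\le1$. Let $\Sigma=\mathcal{D}^{\mathbb{N}}$, write $\omega=((i_\nu,j_\nu))_{\nu\ge1}$, $\Pi(\omega)=\lim_n S_{\omega_1}\circ\cdots\circ S_{\omega_n}([0,1]^2)$.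 Define $L_n(\omega)=\min\{l\ge1:\prod_{\nu=1}^l a_{i_\nu j_\nu}\le\prod_{\nu=1}^n b_{i_\nu}\}$ and $B_n(\omega)=\{\omega'\in\Sigma:\omega'_\nu=\omega_\nu\ (1\le\nu\le L_n(\omega)),\ i'_\nu=i_\nu\ (L_n(\omega)<\nu\le n)\}$. $\mathcal{D}$ is two-dimensional if there exist $(i_1,j_1),(i_2,j_2)\in\mathcal{D}$ with $i_1=i_2$, $j_1\ne j_2$, and $(i_3,j_3),(i_4,j_4)\in\mathcal{D}$ with $i_3\ne i_4$. For $d\in\mathcal{D}$, $R^d_n(\omega)=\min\{l>n:\omega_l=d\}-n$, $R_n(\omega)=\max_{d\in\mathcal{D}}R^d_n(\omega)$. $\dim$ is Hausdorff dimension. *)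

theory Defs
  imports "HOL-Analysis.Analysis"
begin

definition hausdorff_content :: "real \<Rightarrow> real \<Rightarrow> 'a::metric_space set \<Rightarrow> ennreal" where
  "hausdorff_content s \<delta> A =
     (INF U \<in> {U :: nat \<Rightarrow> 'a set. A \<subseteq> (\<Union>i. U i) \<and> (\<forall>i. bounded (U i) \<and> diameter (U i) \<le> \<delta>)}.
        (\<Sum>i. ennreal (diameter (U i) powr s)))"

definition hausdorff_measure :: "real \<Rightarrow> 'a::metric_space set \<Rightarrow> ennreal" where
  "hausdorff_measure s A = (SUP \<delta> \<in> {0<..}. hausdorff_content s \<delta> A)"

definition hausdorff_dim :: "'a::metric_space set \<Rightarrow> real" where
  "hausdorff_dim A = Inf {s. 0 < s \<and> hausdorff_measure s A = 0}"

text \<open>Digits are pairs (i,j); a symbolic sequence omega is 0-indexed: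
  omega k is the (k+1)-st symbol omega_(k+1) of the paper.\<close>

definition digits :: "nat \<Rightarrow> (nat \<Rightarrow> nat) \<Rightarrow> (nat \<times> nat) set" where
  "digits p m = {(i, j). 1 \<le> i \<and> i \<le> p \<and> 1 \<le> j \<and> j \<le> m i}"

definition SigmaLG :: "nat \<Rightarrow> (nat \<Rightarrow> nat) \<Rightarrow> (nat \<Rightarrow> nat \<times> nat) set" where
  "SigmaLG p m = {\<omega>. \<forall>k. \<omega> k \<in> digits p m}"

definition two_dimensional :: "nat \<Rightarrow> (nat \<Rightarrow> nat) \<Rightarrow> bool" where
  "two_dimensional p m \<longleftrightarrow>
     (\<exists>i1 j1 i2 j2. (i1, j1) \<in> digits p m \<and> (i2, j2) \<in> digits p m \<and> i1 = i2 \<and> j1 \<noteq> j2) \<and>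
     (\<exists>i3 j3 i4 j4. (i3, j3) \<in> digits p m \<and> (i4, j4) \<in> digits p m \<and> i3 \<noteq> i4)"

definition LGmap :: "(nat \<Rightarrow> nat \<Rightarrow> real) \<Rightarrow> (nat \<Rightarrow> real) \<Rightarrow> (nat \<Rightarrow> nat \<Rightarrow> real) \<Rightarrow> (nat \<Rightarrow> real)
    \<Rightarrow> nat \<times> nat \<Rightarrow> real \<times> real \<Rightarrow> real \<times> real" where
  "LGmap a b c d ij z = (a (fst ij) (snd ij) * fst z + c (fst ij) (snd ij), b (fst ij) * snd z + d (fst ij))"

primrec cylmap :: "(nat \<Rightarrow> nat \<Rightarrow> real) \<Rightarrow> (nat \<Rightarrow> real) \<Rightarrow> (nat \<Rightarrow> nat \<Rightarrow> real) \<Rightarrow> (nat \<Rightarrow> real)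
    \<Rightarrow> (nat \<Rightarrow> nat \<times> nat) \<Rightarrow> nat \<Rightarrow> real \<times> real \<Rightarrow> real \<times> real" where
  "cylmap a b c d \<omega> 0 = id"
| "cylmap a b c d \<omega> (Suc n) = cylmap a b c d \<omega> n \<circ> LGmap a b c d (\<omega> n)"

definition piLG :: "(nat \<Rightarrow> nat \<Rightarrow> real) \<Rightarrow> (nat \<Rightarrow> real) \<Rightarrow> (nat \<Rightarrow> nat \<Rightarrow> real) \<Rightarrow> (nat \<Rightarrow> real)
    \<Rightarrow> (nat \<Rightarrow> nat \<times> nat) \<Rightarrow> real \<times> real" where
  "piLG a b c d \<omega> = (THE z. \<forall>n. z \<in> cylmap a b c d \<omega> n ` ({0..1} \<times> {0..1}))"

text \<open>prod_b b omega n = prod_(nu=1..n) b_(i_nu); prod_a a omega l = prod_(nu=1..l) a_(i_nu j_nu).\<close>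
definition prod_b :: "(nat \<Rightarrow> real) \<Rightarrow> (nat \<Rightarrow> nat \<times> nat) \<Rightarrow> nat \<Rightarrow> real" where
  "prod_b b \<omega> n = (\<Prod>k<n. b (fst (\<omega> k)))"

definition prod_a :: "(nat \<Rightarrow> nat \<Rightarrow> real) \<Rightarrow> (nat \<Rightarrow> nat \<times> nat) \<Rightarrow> nat \<Rightarrow> real" where
  "prod_a a \<omega> l = (\<Prod>k<l. a (fst (\<omega> k)) (snd (\<omega> k)))"

definition Lfun :: "(nat \<Rightarrow> nat \<Rightarrow> real) \<Rightarrow> (nat \<Rightarrow> real) \<Rightarrow> (nat \<Rightarrow> nat \<times> nat) \<Rightarrow> nat \<Rightarrow> nat" where
  "Lfun a b \<omega> n = (LEAST l. 1 \<le> l \<and> prod_a a \<omega> l \<le> prod_b b \<omega> n)"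

text \<open>Approximate square B_n(omega): first L_n symbols agree, and the first
  coordinates agree for symbols L_n+1..n (paper indexing).\<close>
definition Bset :: "nat \<Rightarrow> (nat \<Rightarrow> nat) \<Rightarrow> (nat \<Rightarrow> nat \<Rightarrow> real) \<Rightarrow> (nat \<Rightarrow> real)
    \<Rightarrow> (nat \<Rightarrow> nat \<times> nat) \<Rightarrow> nat \<Rightarrow> (nat \<Rightarrow> nat \<times> nat) set" where
  "Bset p m a b \<omega> n =
     {\<omega>' \<in> SigmaLG p m. (\<forall>k < Lfun a b \<omega> n. \<omega>' k = \<omega> k) \<and>
        (\<forall>k. Lfun a b \<omega> n \<le> k \<and> k < n \<longrightarrow> fst (\<omega>' k) = fst (\<omega> k))}"

text \<open>The ratio log mu(B_n(omega)) / log prod_(nu=1..n) b_(i_nu), as an extended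
  real; when mu(B_n(omega)) = 0 (log = -infinity) the ratio is +infinity.\<close>
definition loc_ratio :: "(nat \<Rightarrow> nat \<times> nat) measure \<Rightarrow> nat \<Rightarrow> (nat \<Rightarrow> nat) \<Rightarrow> (nat \<Rightarrow> nat \<Rightarrow> real)
    \<Rightarrow> (nat \<Rightarrow> real) \<Rightarrow> (nat \<Rightarrow> nat \<times> nat) \<Rightarrow> nat \<Rightarrow> ereal" where
  "loc_ratio \<mu> p m a b \<omega> n =
     (if measure \<mu> (Bset p m a b \<omega> n) = 0 then \<infinity>
      else ereal (ln (measure \<mu> (Bset p m a b \<omega> n)) / ln (prod_b b \<omega> n)))"

text \<open>Return time R^e_n(omega) = min{l > n : omega_l = e} - n (paper indexing),
  which is infinity if e does not occur after position n.\<close>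
definition return_time :: "(nat \<Rightarrow> nat \<times> nat) \<Rightarrow> nat \<Rightarrow> nat \<times> nat \<Rightarrow> ereal" where
  "return_time \<omega> n e =
     (if \<exists>k\<ge>n. \<omega> k = e then ereal (real (Suc (LEAST k. n \<le> k \<and> \<omega> k = e) - n)) else \<infinity>)"

definition Rmax :: "nat \<Rightarrow> (nat \<Rightarrow> nat) \<Rightarrow> (nat \<Rightarrow> nat \<times> nat) \<Rightarrow> nat \<Rightarrow> ereal" where
  "Rmax p m \<omega> n = Max ((return_time \<omega> n) ` digits p m)"

end

theory Submission
  imports Defs
begin

(* Approximate squares with mu(B_n) >= height^s1 ("heavy"), taken at
      the first heavy level above N, form a disjoint cover; hence H^s2 vanishes for s2 > s1.
   5. Lower bound (part i).  When all digits recur after a sublinear delay, a small ball around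
      pi(omega) only meets sequences of one approximate square, whose mass is at most C * rho^s;
      the mass distribution principle applied to a piece of S of positive measure concludes. *)

section \<open>Nested intervals generated by affine contractions of [0,1]\<close>

text \<open>The maps x \<mapsto> t k + r k * x send [0,1] into itself.  Composing the first n of them
  yields the interval [left_end r t n, left_end r t n + width r n]; these intervals are nested
  and shrink geometrically to limit_point r t.\<close>

definition width :: "(nat \<Rightarrow> real) \<Rightarrow> nat \<Rightarrow> real" where
  "width r n = (\<Prod>k<n. r k)"

definition left_end :: "(nat \<Rightarrow> real) \<Rightarrow> (nat \<Rightarrow> real) \<Rightarrow> nat \<Rightarrow> real" where
  "left_end r t n = (\<Sum>k<n. t k * width r k)"

definition limit_point :: "(nat \<Rightarrow> real) \<Rightarrow> (nat \<Rightarrow> real) \<Rightarrow> real" where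
  "limit_point r t = (\<Sum>k. t k * width r k)"

definition affine_system :: "real \<Rightarrow> (nat \<Rightarrow> real) \<Rightarrow> (nat \<Rightarrow> real) \<Rightarrow> bool" where
  "affine_system q r t \<longleftrightarrow> q < 1 \<and> (\<forall>k. 0 < r k \<and> r k \<le> q \<and> 0 \<le> t k \<and> t k + r k \<le> 1)"

definition shift :: "nat \<Rightarrow> (nat \<Rightarrow> 'a) \<Rightarrow> nat \<Rightarrow> 'a" where
  "shift n f = (\<lambda>k. f (n + k))"

lemma width_0 [simp]: "width r 0 = 1"
  by (simp add: width_def)

lemma width_Suc: "width r (Suc n) = width r n * r n"
  by (simp add: width_def)

lemma left_end_0 [simp]: "left_end r t 0 = 0"
  by (simp add: left_end_def)

lemma left_end_Suc: "left_end r t (Suc n) = left_end r t n + t n * width r n"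
  by (simp add: left_end_def)

lemma width_cong: "(\<And>k. k < n \<Longrightarrow> r' k = r k) \<Longrightarrow> width r' n = width r n"
  unfolding width_def by (rule prod.cong) auto

lemma left_end_cong:
  "(\<And>k. k < n \<Longrightarrow> r' k = r k \<and> t' k = t k) \<Longrightarrow> left_end r' t' n = left_end r t n"
  unfolding left_end_def by (rule sum.cong) (auto intro!: width_cong)

lemma width_add: "width r (j + n) = width r n * width (shift n r) j"
  by (induction j) (auto simp: width_Suc shift_def add.commute)

lemma affine_system_shift: "affine_system q r t \<Longrightarrow> affine_system q (shift n r) (shift n t)"
  by (simp add: affine_system_def shift_def)

lemma affine_systemD:
  assumes "affine_system q r t"
  shows "0 < r k" "r k \<le> q" "0 \<le> t k" "t k + r k \<le> 1" "q < 1"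
  using assms by (auto simp: affine_system_def)

lemma width_ge_pow: "(\<And>k. w \<le> r k) \<Longrightarrow> 0 \<le> w \<Longrightarrow> w ^ n \<le> width r n"
proof (induction n)
  case (Suc n)
  have "0 \<le> width r n" using Suc zero_le_power[of w n] by (meson order_trans)
  hence "w ^ n * w \<le> width r n * r n"
    using Suc by (intro mult_mono) auto
  thus ?case by (simp add: width_Suc mult.commute)
qed simp

context
  fixes q :: real and r t :: "nat \<Rightarrow> real"
  assumes sys: "affine_system q r t"
begin

lemma width_pos: "0 < width r n"
  by (induction n) (auto simp: width_Suc affine_systemD[OF sys])

lemma width_le_pow: "width r n \<le> q ^ n"
proof (induction n)
  case (Suc n)
  have "width r n * r n \<le> q ^ n * q"
    using Suc affine_systemD(1-4)[OF sys, of n] width_pos[of n] by (intro mult_mono) auto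
  thus ?case by (simp add: width_Suc mult.commute)
qed simp

lemma width_antimono: "m \<le> n \<Longrightarrow> width r n \<le> width r m"
proof (induction n rule: dec_induct)
  case (step n)
  have "width r n * r n \<le> width r n * 1"
    using affine_systemD(1-4)[OF sys, of n] width_pos[of n] by (intro mult_left_mono) auto
  thus ?case using step by (simp add: width_Suc)
qed simp

lemma left_end_nonneg: "0 \<le> left_end r t n"
  unfolding left_end_def
  using affine_systemD(3)[OF sys] width_pos by (intro sum_nonneg mult_nonneg_nonneg) (auto intro: less_imp_le)

lemma left_end_mono: "m \<le> n \<Longrightarrow> left_end r t m \<le> left_end r t n"
proof (induction n rule: dec_induct)
  case (step n)
  have "0 \<le> t n * width r n" using affine_systemD(3)[OF sys, of n] width_pos[of n] by simp
  thus ?case using step by (simp add: left_end_Suc)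
qed simp

lemma right_end_antimono: "m \<le> n \<Longrightarrow> left_end r t n + width r n \<le> left_end r t m + width r m"
proof (induction n rule: dec_induct)
  case (step n)
  have "width r n * (t n + r n) \<le> width r n * 1"
    using affine_systemD(1-4)[OF sys, of n] width_pos[of n] by (intro mult_left_mono) auto
  thus ?case using step by (simp add: left_end_Suc width_Suc algebra_simps)
qed simp

lemma right_end_le_1: "left_end r t n + width r n \<le> 1"
  using right_end_antimono[of 0 n] by simp

lemma summable_limit_point: "summable (\<lambda>k. t k * width r k)"
proof (rule summable_comparison_test[of _ "\<lambda>k. q ^ k"])
  have q: "0 \<le> q" "q < 1" using affine_systemD(5)[OF sys] affine_systemD(1,2)[OF sys, of 0] by auto
  have "norm (t k * width r k) \<le> q ^ k" for k
  proof -
    have "t k * width r k \<le> 1 * q ^ k"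
      using affine_systemD(1-4)[OF sys, of k] width_le_pow[of k] width_pos[of k] q by (intro mult_mono) auto
    thus ?thesis using affine_systemD(1-4)[OF sys, of k] width_pos[of k] by simp
  qed
  thus "\<exists>N. \<forall>n\<ge>N. norm (t n * width r n) \<le> q ^ n" by blast
  show "summable (\<lambda>k. q ^ k)" using q by simp
qed

end

lemma limit_point_split:
  assumes sys: "affine_system q r t"
  shows "limit_point r t = left_end r t n + width r n * limit_point (shift n r) (shift n t)"
proof -
  have s: "summable (\<lambda>k. t k * width r k)" by (rule summable_limit_point[OF sys])
  have s': "summable (\<lambda>k. shift n t k * width (shift n r) k)"
    by (rule summable_limit_point[OF affine_system_shift[OF sys]])
  have "limit_point r t = (\<Sum>j. t (j + n) * width r (j + n)) + left_end r t n"
    unfolding limit_point_def left_end_def by (rule suminf_split_initial_segment[OF s])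
  also have "(\<lambda>j. t (j + n) * width r (j + n)) = (\<lambda>j. width r n * (shift n t j * width (shift n r) j))"
    by (auto simp: width_add shift_def add.commute)
  also have "(\<Sum>j. width r n * (shift n t j * width (shift n r) j))
      = width r n * limit_point (shift n r) (shift n t)"
    unfolding limit_point_def by (rule suminf_mult[OF s'])
  finally show ?thesis by simp
qed

lemma limit_point_unit:
  assumes sys: "affine_system q r t"
  shows "0 \<le> limit_point r t" "limit_point r t \<le> 1"
proof -
  have s: "summable (\<lambda>k. t k * width r k)" by (rule summable_limit_point[OF sys])
  show "0 \<le> limit_point r t" unfolding limit_point_def
    using affine_systemD(3)[OF sys] width_pos[OF sys]
    by (intro suminf_nonneg[OF s] mult_nonneg_nonneg) (auto intro: less_imp_le)
  show "limit_point r t \<le> 1" unfolding limit_point_def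
  proof (rule suminf_le_const[OF s])
    fix n show "(\<Sum>k<n. t k * width r k) \<le> 1"
      using right_end_le_1[OF sys, of n] width_pos[OF sys, of n] by (simp add: left_end_def)
  qed
qed

lemma limit_point_interval:
  assumes sys: "affine_system q r t"
  shows "left_end r t n \<le> limit_point r t" "limit_point r t \<le> left_end r t n + width r n"
proof -
  note u = limit_point_unit[OF affine_system_shift[OF sys, of n]]
  have w: "0 < width r n" by (rule width_pos[OF sys])
  have "0 \<le> width r n * limit_point (shift n r) (shift n t)" using u w by simp
  thus "left_end r t n \<le> limit_point r t" by (simp add: limit_point_split[OF sys, of n])
  have "width r n * limit_point (shift n r) (shift n t) \<le> width r n * 1"
    using u w by (intro mult_left_mono) auto
  thus "limit_point r t \<le> left_end r t n + width r n" by (simp add: limit_point_split[OF sys, of n])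
qed

lemma limit_point_close:
  assumes "affine_system q r t" "affine_system q r' t'" "\<And>k. k < n \<Longrightarrow> r' k = r k \<and> t' k = t k"
  shows "\<bar>limit_point r' t' - limit_point r t\<bar> \<le> width r n"
proof -
  have "left_end r' t' n = left_end r t n" "width r' n = width r n"
    using assms(3) by (auto intro!: left_end_cong width_cong)
  thus ?thesis using limit_point_interval[OF assms(1), of n] limit_point_interval[OF assms(2), of n]
    by linarith
qed

lemma limit_point_unique:
  assumes sys: "affine_system q r t"
    and x: "\<And>n. left_end r t n \<le> x \<and> x \<le> left_end r t n + width r n"
  shows "x = limit_point r t"
proof (rule ccontr)
  assume "x \<noteq> limit_point r t"
  then obtain n where n: "q ^ n < \<bar>x - limit_point r t\<bar>"
    using real_arch_pow_inv[of "\<bar>x - limit_point r t\<bar>" q] affine_systemD(5)[OF sys] by auto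
  have "\<bar>x - limit_point r t\<bar> \<le> width r n"
    using x[of n] limit_point_interval[OF sys, of n] by linarith
  thus False using n width_le_pow[OF sys, of n] by linarith
qed

lemma limit_point_margin:
  assumes sys: "affine_system q r t" and w: "\<And>k. w \<le> r k" "0 \<le> w"
  shows "w ^ j * t j \<le> limit_point r t" "w ^ j * (1 - t j - r j) \<le> 1 - limit_point r t"
proof -
  have pw: "w ^ j \<le> width r j" by (rule width_ge_pow) (use w in auto)
  note in_Suc = limit_point_interval[OF sys, of "Suc j"]
  note d = affine_systemD(1-4)[OF sys, of j]
  have "w ^ j * t j \<le> width r j * t j" using mult_right_mono[OF pw] d by simp
  thus "w ^ j * t j \<le> limit_point r t"
    using in_Suc left_end_nonneg[OF sys, of j] by (simp add: left_end_Suc algebra_simps)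
  have "w ^ j * (1 - t j - r j) \<le> width r j * (1 - t j - r j)" using mult_right_mono[OF pw] d by simp
  thus "w ^ j * (1 - t j - r j) \<le> 1 - limit_point r t"
    using in_Suc right_end_le_1[OF sys, of j] by (simp add: left_end_Suc width_Suc algebra_simps)
qed

lemma limit_point_margin_powr:
  assumes sys: "affine_system q r t" and w: "\<And>k. w \<le> r k" "0 < w" "w \<le> 1" and j: "real j \<le> x"
  shows "w powr x * t j \<le> limit_point r t" "w powr x * (1 - t j - r j) \<le> 1 - limit_point r t"
proof -
  have pw: "w powr x \<le> w ^ j" using powr_mono'[OF j, of w] w(2,3) by (simp add: powr_realpow)
  note d = affine_systemD(3,4)[OF sys, of j]
  note mg = limit_point_margin[OF sys w(1) less_imp_le[OF w(2)], of j]
  show "w powr x * t j \<le> limit_point r t"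
    using mult_right_mono[OF pw d(1)] mg(1) w(2) by linarith
  show "w powr x * (1 - t j - r j) \<le> 1 - limit_point r t"
    using mult_right_mono[OF pw, of "1 - t j - r j"] d(2) mg(2) w(2) by linarith
qed

lemma limit_point_right_of:
  assumes sys: "affine_system q r t" and sys': "affine_system q r' t'"
    and agree: "\<And>k. k < K \<Longrightarrow> r' k = r k \<and> t' k = t k" and K: "K < n" and right: "t K + r K \<le> t' K"
  shows "left_end r t n + width r n \<le> limit_point r' t'"
proof -
  have e: "left_end r' t' K = left_end r t K" "width r' K = width r K"
    using agree by (auto intro!: left_end_cong width_cong)
  have "left_end r t n + width r n \<le> left_end r t (Suc K) + width r (Suc K)"
    by (rule right_end_antimono[OF sys]) (use K in auto)
  also have "\<dots> = left_end r t K + width r K * (t K + r K)"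
    by (simp add: left_end_Suc width_Suc algebra_simps)
  also have "\<dots> \<le> left_end r t K + width r K * t' K"
    using mult_left_mono[OF right, of "width r K"] width_pos[OF sys, of K] by simp
  also have "\<dots> \<le> limit_point r' t'"
    using limit_point_interval(1)[OF sys', of "Suc K"] e by (simp add: left_end_Suc mult.commute)
  finally show ?thesis .
qed

lemma limit_point_left_of:
  assumes sys: "affine_system q r t" and sys': "affine_system q r' t'"
    and agree: "\<And>k. k < K \<Longrightarrow> r' k = r k \<and> t' k = t k" and K: "K < n" and left: "t' K + r' K \<le> t K"
  shows "limit_point r' t' \<le> left_end r t n"
proof -
  have e: "left_end r' t' K = left_end r t K" "width r' K = width r K"
    using agree by (auto intro!: left_end_cong width_cong)
  have "limit_point r' t' \<le> left_end r t K + width r K * (t' K + r' K)"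
    using limit_point_interval(2)[OF sys', of "Suc K"] e by (simp add: left_end_Suc width_Suc algebra_simps)
  also have "\<dots> \<le> left_end r t K + width r K * t K"
    using mult_left_mono[OF left, of "width r K"] width_pos[OF sys, of K] by simp
  also have "\<dots> \<le> left_end r t n"
    using left_end_mono[OF sys, of "Suc K" n] K by (simp add: left_end_Suc mult.commute)
  finally show ?thesis .
qed

lemma limit_point_separated:
  assumes sys: "affine_system q r t" and sys': "affine_system q r' t'"
    and agree: "\<And>k. k < K \<Longrightarrow> r' k = r k \<and> t' k = t k" and K: "K < n"
    and apart: "t K + r K \<le> t' K \<or> t' K + r' K \<le> t K"
  shows "width r n * min (limit_point (shift n r) (shift n t)) (1 - limit_point (shift n r) (shift n t))
           \<le> \<bar>limit_point r' t' - limit_point r t\<bar>"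
proof -
  let ?X = "limit_point (shift n r) (shift n t)"
  have split: "limit_point r t = left_end r t n + width r n * ?X" by (rule limit_point_split[OF sys])
  have w: "0 < width r n" by (rule width_pos[OF sys])
  from apart show ?thesis
  proof
    assume "t K + r K \<le> t' K"
    hence "width r n * (1 - ?X) \<le> limit_point r' t' - limit_point r t"
      using limit_point_right_of[OF sys sys' agree K] split by (simp add: algebra_simps)
    moreover have "width r n * min ?X (1 - ?X) \<le> width r n * (1 - ?X)"
      using w by (intro mult_left_mono) auto
    ultimately show ?thesis by linarith
  next
    assume "t' K + r' K \<le> t K"
    hence "width r n * ?X \<le> limit_point r t - limit_point r' t'"
      using limit_point_left_of[OF sys sys' agree K] split by (simp add: algebra_simps)
    moreover have "width r n * min ?X (1 - ?X) \<le> width r n * ?X"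
      using w by (intro mult_left_mono) auto
    ultimately show ?thesis by linarith
  qed
qed

lemma first_difference:
  fixes f g :: "nat \<Rightarrow> 'a"
  assumes "\<exists>k<n. f k \<noteq> g k"
  obtains K where "K < n" "f K \<noteq> g K" "\<And>k. k < K \<Longrightarrow> f k = g k"
proof -
  obtain K where "K < n \<and> f K \<noteq> g K" "\<forall>k<K. \<not> (k < n \<and> f k \<noteq> g k)"
    using exists_least_iff[of "\<lambda>k. k < n \<and> f k \<noteq> g k"] assms by blast
  thus ?thesis using that by auto
qed

lemma last_occurrence:
  assumes "P N" "finite {n. P n}"
  obtains n where "N \<le> n" "P n" "\<not> P (Suc n)"
proof -
  let ?n = "Max {n. P n}"
  have "P ?n" using Max_in[OF assms(2)] assms(1) by auto
  moreover have "N \<le> ?n" using Max_ge[OF assms(2)] assms(1) by auto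
  moreover have "\<not> P (Suc ?n)" using Max_ge[OF assms(2), of "Suc ?n"] by auto
  ultimately show ?thesis using that by blast
qed

lemma Least_cong_bound:
  fixes P P' :: "nat \<Rightarrow> bool"
  assumes "P M'" "M' \<le> M" "\<And>l. l \<le> M \<Longrightarrow> P l = P' l"
  shows "(LEAST l. P' l) = (LEAST l. P l)"
proof (rule Least_equality)
  have "P (LEAST l. P l)" "(LEAST l. P l) \<le> M'" using LeastI[of P] Least_le[of P] assms(1) by auto
  thus "P' (LEAST l. P l)" using assms(2,3) by auto
  fix y assume "P' y"
  show "(LEAST l. P l) \<le> y"
  proof (cases "y \<le> M")
    case True thus ?thesis using \<open>P' y\<close> assms(3) by (auto intro: Least_le)
  qed (use \<open>(LEAST l. P l) \<le> M'\<close> assms(2) in auto)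
qed

section \<open>Hausdorff content, measure and dimension\<close>

lemma hausdorff_content_le_cover:
  assumes "A \<subseteq> (\<Union>i. U i)" "\<And>i. bounded (U i)" "\<And>i. diameter (U i) \<le> \<delta>"
  shows "hausdorff_content s \<delta> A \<le> (\<Sum>i. ennreal (diameter (U i) powr s))"
  unfolding hausdorff_content_def by (rule INF_lower) (use assms in auto)

lemma hausdorff_measure_zeroI:
  assumes "\<And>\<delta> e. 0 < \<delta> \<Longrightarrow> 0 < e \<Longrightarrow> hausdorff_content s \<delta> A \<le> ennreal e"
  shows "hausdorff_measure s A = 0"
proof -
  have "hausdorff_content s \<delta> A \<le> 0" if "0 < \<delta>" for \<delta>
    by (rule ennreal_le_epsilon) (use assms that in auto)
  hence "hausdorff_measure s A \<le> 0" unfolding hausdorff_measure_def by (intro SUP_least) auto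
  thus ?thesis by simp
qed

lemma hausdorff_dim_le:
  assumes "\<And>\<epsilon>. 0 < \<epsilon> \<Longrightarrow> hausdorff_measure (t + \<epsilon>) A = 0" "0 \<le> t"
  shows "hausdorff_dim A \<le> t"
proof (rule field_le_epsilon)
  fix \<epsilon> :: real assume e: "0 < \<epsilon>"
  have "t + \<epsilon> \<in> {s. 0 < s \<and> hausdorff_measure s A = 0}" using assms e by simp
  moreover have "bdd_below {s. 0 < s \<and> hausdorff_measure s A = 0}" by (rule bdd_belowI[of _ 0]) auto
  ultimately show "hausdorff_dim A \<le> t + \<epsilon>" unfolding hausdorff_dim_def by (rule cInf_lower)
qed

text \<open>The definition of dimension as an infimum needs some exponent with vanishing measure.\<close>
lemma hausdorff_dim_ge:
  assumes "\<exists>s>0. hausdorff_measure s A = 0" "\<And>s. 0 < s \<Longrightarrow> s < t \<Longrightarrow> hausdorff_measure s A \<noteq> 0"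
  shows "t \<le> hausdorff_dim A"
  unfolding hausdorff_dim_def
proof (rule cInf_greatest)
  show "{s. 0 < s \<and> hausdorff_measure s A = 0} \<noteq> {}" using assms(1) by auto
  fix x assume "x \<in> {s. 0 < s \<and> hausdorff_measure s A = 0}"
  thus "t \<le> x" using assms(2)[of x] by force
qed

lemma norm_pair_le: "norm (x :: real \<times> real) \<le> \<bar>fst x\<bar> + \<bar>snd x\<bar>"
  using norm_Pair_le[of "fst x" "snd x"] by simp

lemma unit_interval_cell:
  fixes x :: real and K :: nat
  assumes "1 \<le> K" "0 \<le> x" "x \<le> 1"
  shows "\<exists>u<K. real u / K \<le> x \<and> x \<le> real (u + 1) / K"
proof (cases "x = 1")
  case True
  thus ?thesis using assms by (intro exI[of _ "K - 1"]) (auto simp: of_nat_diff divide_simps)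
next
  case False
  define u where "u = nat \<lfloor>x * K\<rfloor>"
  have "x * K < K" using assms False by simp
  hence "\<lfloor>x * K\<rfloor> < int K" by linarith
  hence "u < K" using assms unfolding u_def by (simp add: nat_less_iff)
  moreover have "real u \<le> x * K" "x * K \<le> real u + 1" unfolding u_def using assms by auto
  ultimately show ?thesis using assms by (intro exI[of _ u]) (auto simp: divide_simps)
qed

lemma unit_square_grid_cover:
  fixes K :: nat
  assumes K: "1 \<le> K"
  obtains U :: "nat \<Rightarrow> (real \<times> real) set"
  where "{0..1} \<times> {0..1} \<subseteq> (\<Union>i. U i)" "\<And>i. bounded (U i)" "\<And>i. diameter (U i) \<le> 2 / K"
    "\<And>i. K * K \<le> i \<Longrightarrow> U i = {}"
proof -
  define box where "box = (\<lambda>u v::nat. {real u / K .. real (u + 1) / K} \<times> {real v / K .. real (v + 1) / K})"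
  define U where "U = (\<lambda>i. if i < K * K then box (i div K) (i mod K) else {})"
  have dbox: "diameter (box u v) \<le> 2 / K" for u v
  proof (rule diameter_le)
    fix x y assume "x \<in> box u v" "y \<in> box u v"
    have e: "real (w + 1) / K = real w / K + 1 / K" for w by (simp add: add_divide_distrib)
    have "\<bar>fst x - fst y\<bar> \<le> 1 / K" "\<bar>snd x - snd y\<bar> \<le> 1 / K"
      using \<open>x \<in> box u v\<close> \<open>y \<in> box u v\<close> unfolding box_def e by (auto simp: mem_Times_iff abs_le_iff)
    thus "norm (x - y) \<le> 2 / K" using norm_pair_le[of "x - y"] by simp
  qed simp
  have cover: "z \<in> (\<Union>i. U i)" if "z \<in> {0..1} \<times> {0..1}" for z
  proof -
    have z: "0 \<le> fst z" "fst z \<le> 1" "0 \<le> snd z" "snd z \<le> 1" using that by auto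
    obtain u where u: "u < K" "real u / K \<le> fst z" "fst z \<le> real (u + 1) / K"
      using unit_interval_cell[OF K z(1,2)] by blast
    obtain v where v: "v < K" "real v / K \<le> snd z" "snd z \<le> real (v + 1) / K"
      using unit_interval_cell[OF K z(3,4)] by blast
    have "u * K + v < (u + 1) * K" using v(1) by simp
    also have "\<dots> \<le> K * K" using mult_le_mono1[of "u + 1" K K] u(1) by simp
    finally have "z \<in> U (u * K + v)" using u v unfolding U_def box_def by (auto simp: mem_Times_iff)
    thus ?thesis by blast
  qed
  show ?thesis
  proof (rule that)
    show "bounded (U i)" for i unfolding U_def box_def by (auto intro!: bounded_Times)
    show "diameter (U i) \<le> 2 / K" for i using dbox by (simp add: U_def)
    show "U i = {}" if "K * K \<le> i" for i using that by (simp add: U_def)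
  qed (use cover in blast)
qed

lemma hausdorff_measure_unit_square:
  assumes A: "A \<subseteq> {0..(1::real)} \<times> {0..(1::real)}"
  shows "hausdorff_measure 3 A = 0"
proof (rule hausdorff_measure_zeroI)
  fix \<delta> e :: real assume d: "0 < \<delta>" and e: "0 < e"
  obtain K :: nat where K: "real K \<ge> max 1 (max (2 / \<delta>) (8 / e))" using real_arch_simple by blast
  have K0: "1 \<le> real K" "2 / \<delta> \<le> real K" "8 / e \<le> real K" using K by auto
  have Kpos: "0 < real K" using K0(1) by simp
  have K1: "1 \<le> K" using K0(1) by simp
  have K2: "2 / K \<le> \<delta>" using K0(2) Kpos d by (simp add: field_simps)
  have K3: "8 / K \<le> e" using K0(3) Kpos e by (simp add: field_simps)
  obtain U :: "nat \<Rightarrow> (real \<times> real) set"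
    where U: "{0..1} \<times> {0..1} \<subseteq> (\<Union>i. U i)" "\<And>i. bounded (U i)"
      "\<And>i. diameter (U i) \<le> 2 / K" "\<And>i. K * K \<le> i \<Longrightarrow> U i = {}"
    using unit_square_grid_cover[OF K1] by blast
  have "diameter (U i) \<le> \<delta>" for i using U(3)[of i] K2 by linarith
  hence "hausdorff_content 3 \<delta> A \<le> (\<Sum>i. ennreal (diameter (U i) powr 3))"
    using A U(1,2) by (intro hausdorff_content_le_cover) auto
  also have "\<dots> = (\<Sum>i<K*K. ennreal (diameter (U i) powr 3))"
    by (rule suminf_finite) (auto simp: U(4))
  also have "\<dots> \<le> (\<Sum>i<K*K. ennreal ((2 / K) powr 3))"
  proof (rule sum_mono)
    fix i
    have "diameter (U i) powr 3 \<le> (2 / K) powr 3"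
      by (rule powr_mono2) (use U(3)[of i] diameter_ge_0[OF U(2)[of i]] in auto)
    thus "ennreal (diameter (U i) powr 3) \<le> ennreal ((2 / K) powr 3)" by (rule ennreal_leI)
  qed
  also have "\<dots> = ennreal (real (K * K) * (2 / K) powr 3)"
    by (simp add: ennreal_mult' ennreal_of_nat_eq_real_of_nat)
  also have "real (K * K) * (2 / K) powr 3 = 8 / K"
    using Kpos by (simp add: powr_numeral divide_simps power3_eq_cube)
  also have "ennreal (8 / K) \<le> ennreal e" using K3 by (rule ennreal_leI)
  finally show "hausdorff_content 3 \<delta> A \<le> ennreal e" .
qed

lemma countable_disjoint_enumeration:
  assumes cM: "countable M" and eq_or_disj: "\<And>A B. A \<in> M \<Longrightarrow> B \<in> M \<Longrightarrow> A = B \<or> A \<inter> B = {}"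
  shows "\<exists>U :: nat \<Rightarrow> 'a set. disjoint_family U \<and> (\<forall>k. U k \<in> M \<or> U k = {}) \<and> M \<subseteq> range U"
proof (intro exI conjI allI)
  define U where "U = (\<lambda>k. if k \<in> to_nat_on M ` M then from_nat_into M k else {})"
  show "U k \<in> M \<or> U k = {}" for k unfolding U_def by (auto intro!: from_nat_into)
  show "M \<subseteq> range U"
  proof
    fix A assume "A \<in> M"
    hence "U (to_nat_on M A) = A" using from_nat_into_to_nat_on[OF cM] by (auto simp: U_def)
    thus "A \<in> range U" by (metis rangeI)
  qed
  show "disjoint_family U"
    unfolding disjoint_family_on_def
  proof (intro ballI impI)
    fix k k' :: nat assume kk: "k \<noteq> k'"
    show "U k \<inter> U k' = {}"
    proof (cases "k \<in> to_nat_on M ` M \<and> k' \<in> to_nat_on M ` M")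
      case True
      hence "U k \<noteq> U k'" "U k \<in> M" "U k' \<in> M"
        using kk from_nat_into_inj[OF cM] by (auto simp: U_def intro!: from_nat_into)
      thus ?thesis using eq_or_disj by blast
    qed (auto simp: U_def)
  qed
qed

lemma hausdorff_content_disjoint_cover:
  fixes f :: "'a \<Rightarrow> 'b::metric_space"
  assumes fin: "finite_measure \<mu>" and U: "disjoint_family U" "\<And>k. U k \<in> sets \<mu>"
    and cov: "A \<subseteq> (\<Union>k::nat. f ` U k)" and bdd: "\<And>k. bounded (f ` U k)"
    and small: "\<And>k. diameter (f ` U k) \<le> \<delta>"
    and mass: "\<And>k. diameter (f ` U k) powr s \<le> C * measure \<mu> (U k)" and C: "0 \<le> C"
  shows "hausdorff_content s \<delta> A \<le> ennreal (C * measure \<mu> (space \<mu>))"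
proof -
  have em: "emeasure \<mu> X = ennreal (measure \<mu> X)" for X
    using finite_measure.emeasure_eq_measure[OF fin] by simp
  have "hausdorff_content s \<delta> A \<le> (\<Sum>k. ennreal (diameter (f ` U k) powr s))"
    by (rule hausdorff_content_le_cover[OF cov bdd small])
  also have "\<dots> \<le> (\<Sum>k. ennreal C * emeasure \<mu> (U k))"
    using mass C by (intro suminf_le) (auto simp: em ennreal_mult[symmetric] intro: ennreal_leI)
  also have "\<dots> = ennreal C * emeasure \<mu> (\<Union>k. U k)"
    using suminf_emeasure[of U \<mu>] U by (simp add: ennreal_suminf_cmult image_subset_iff)
  also have "\<dots> \<le> ennreal C * emeasure \<mu> (space \<mu>)"
    using U(2) sets.sets_into_space by (intro mult_left_mono emeasure_mono) auto
  also have "\<dots> = ennreal (C * measure \<mu> (space \<mu>))" using C by (simp add: em ennreal_mult)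
  finally show ?thesis .
qed

lemma ennreal_suminf_halves:
  assumes "0 \<le> e"
  shows "(\<Sum>i. ennreal (e / 2 ^ Suc i)) = ennreal e"
proof -
  have sums_e: "(\<lambda>i. e / 2 ^ Suc i) sums e"
    using sums_mult[OF power_half_series, of e] by (simp add: power_one_over)
  have "(\<Sum>i. ennreal (e / 2 ^ Suc i)) = ennreal (\<Sum>i. e / 2 ^ Suc i)"
    by (rule suminf_ennreal2) (use assms sums_e in \<open>auto simp: sums_iff\<close>)
  thus ?thesis using sums_unique[OF sums_e] by simp
qed



context
  fixes \<mu> :: "'a measure" and f :: "'a \<Rightarrow> 'b::metric_space" and T :: "'a set"
    and s C r0 :: real
  assumes fin: "finite_measure \<mu>" and s: "0 < s" and C: "0 < C"
    and small_balls: "\<And>x \<rho>. x \<in> T \<Longrightarrow> 0 < \<rho> \<Longrightarrow> \<rho> < r0 \<Longrightarrow>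
       \<exists>V\<in>sets \<mu>. {y\<in>T. dist (f y) (f x) \<le> \<rho>} \<subseteq> V \<and> measure \<mu> V \<le> C * \<rho> powr s"
begin

lemma mass_of_small_set:
  assumes bU: "bounded U" and dU: "diameter U < r0" and e: "0 < e"
  shows "\<exists>V\<in>sets \<mu>. {y\<in>T. f y \<in> U} \<subseteq> V \<and> measure \<mu> V \<le> C * diameter U powr s + e"
proof (cases "\<exists>x\<in>T. f x \<in> U")
  case False
  thus ?thesis using e C by (intro bexI[of _ "{}"]) auto
next
  case True
  then obtain x where x: "x \<in> T" "f x \<in> U" by blast
  have r0: "0 < r0" using dU diameter_ge_0[OF bU] by linarith
  define \<rho> where "\<rho> = (if diameter U = 0 then min (r0 / 2) ((e / C) powr (1 / s)) else diameter U)"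
  have \<rho>: "0 < \<rho>" "\<rho> < r0" using diameter_ge_0[OF bU] dU r0 e C by (auto simp: \<rho>_def)
  have C\<rho>: "C * \<rho> powr s \<le> C * diameter U powr s + e"
  proof (cases "diameter U = 0")
    case True
    have "\<rho> powr s \<le> ((e / C) powr (1 / s)) powr s"
      using \<rho> s by (intro powr_mono2) (auto simp: \<rho>_def True)
    also have "\<dots> = e / C" using s e C by (simp add: powr_powr)
    finally show ?thesis using C True by (simp add: field_simps)
  qed (use e in \<open>simp add: \<rho>_def\<close>)
  obtain V where V: "V \<in> sets \<mu>" "{y\<in>T. dist (f y) (f x) \<le> \<rho>} \<subseteq> V" "measure \<mu> V \<le> C * \<rho> powr s"
    using small_balls[OF x(1) \<rho>] by blast
  have "diameter U \<le> \<rho>" using \<rho>(1) by (auto simp: \<rho>_def)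
  hence "dist (f y) (f x) \<le> \<rho>" if "f y \<in> U" for y
    using diameter_bounded_bound[OF bU that x(2)] by linarith
  hence "{y\<in>T. f y \<in> U} \<subseteq> V" using V(2) by blast
  thus ?thesis using V(1,3) C\<rho> by (intro bexI[of _ V]) auto
qed

lemma mass_le_cover_sum:
  assumes T: "T \<in> sets \<mu>" and cov: "f ` T \<subseteq> (\<Union>i::nat. U i)"
    and bU: "\<And>i. bounded (U i)" and dU: "\<And>i. diameter (U i) < r0"
  shows "emeasure \<mu> T \<le> ennreal C * (\<Sum>i. ennreal (diameter (U i) powr s))"
proof (rule ennreal_le_epsilon)
  fix e :: real assume e: "0 < e"
  have em: "emeasure \<mu> X = ennreal (measure \<mu> X)" for X
    using finite_measure.emeasure_eq_measure[OF fin] by simp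
  have "\<forall>i. \<exists>V. V \<in> sets \<mu> \<and> {y\<in>T. f y \<in> U i} \<subseteq> V \<and>
      measure \<mu> V \<le> C * diameter (U i) powr s + e / 2 ^ Suc i"
  proof
    fix i
    have "0 < e / 2 ^ Suc i" using e by simp
    thus "\<exists>V. V \<in> sets \<mu> \<and> {y\<in>T. f y \<in> U i} \<subseteq> V \<and>
        measure \<mu> V \<le> C * diameter (U i) powr s + e / 2 ^ Suc i"
      using mass_of_small_set[OF bU dU] by blast
  qed
  then obtain V where V: "\<And>i. V i \<in> sets \<mu>" "\<And>i. {y\<in>T. f y \<in> U i} \<subseteq> V i"
    "\<And>i. measure \<mu> (V i) \<le> C * diameter (U i) powr s + e / 2 ^ Suc i"
    by (auto dest!: choice)
  have TV: "T \<subseteq> (\<Union>i. V i)" using cov V(2) by blast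
  have "emeasure \<mu> T \<le> emeasure \<mu> (\<Union>i. V i)" using V(1) by (intro emeasure_mono[OF TV]) auto
  also have "\<dots> \<le> (\<Sum>i. emeasure \<mu> (V i))" using V(1) by (intro emeasure_subadditive_countably) auto
  also have "\<dots> \<le> (\<Sum>i. ennreal (C * diameter (U i) powr s) + ennreal (e / 2 ^ Suc i))"
  proof (rule suminf_le)
    fix i
    have "emeasure \<mu> (V i) \<le> ennreal (C * diameter (U i) powr s + e / 2 ^ Suc i)"
      unfolding em by (rule ennreal_leI[OF V(3)])
    also have "\<dots> = ennreal (C * diameter (U i) powr s) + ennreal (e / 2 ^ Suc i)"
      using C e by (intro ennreal_plus) auto
    finally show "emeasure \<mu> (V i) \<le> ennreal (C * diameter (U i) powr s) + ennreal (e / 2 ^ Suc i)" .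
  qed auto
  also have "\<dots> = (\<Sum>i. ennreal (C * diameter (U i) powr s)) + (\<Sum>i. ennreal (e / 2 ^ Suc i))"
    by (rule suminf_add[symmetric]) auto
  also have "(\<Sum>i. ennreal (e / 2 ^ Suc i)) = ennreal e"
    by (rule ennreal_suminf_halves) (use e in simp)
  also have "(\<Sum>i. ennreal (C * diameter (U i) powr s)) = ennreal C * (\<Sum>i. ennreal (diameter (U i) powr s))"
    using C by (simp add: ennreal_mult' ennreal_suminf_cmult)
  finally show "emeasure \<mu> T \<le> ennreal C * (\<Sum>i. ennreal (diameter (U i) powr s)) + ennreal e" .
qed

theorem mass_distribution_principle:
  assumes T: "T \<in> sets \<mu>" "emeasure \<mu> T \<noteq> 0" and TA: "f ` T \<subseteq> A" and r0: "0 < r0"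
  shows "hausdorff_measure s A \<noteq> 0"
proof -
  define mT where "mT = measure \<mu> T"
  have emT: "emeasure \<mu> T = ennreal mT"
    using finite_measure.emeasure_eq_measure[OF fin] by (simp add: mT_def)
  have "mT \<noteq> 0" using T(2) emT by auto
  hence mT: "0 < mT" using measure_nonneg[of \<mu> T] unfolding mT_def by linarith
  have "ennreal (mT / C) \<le> hausdorff_content s (r0 / 2) A"
    unfolding hausdorff_content_def
  proof (rule INF_greatest)
    fix U :: "nat \<Rightarrow> 'b set"
    assume "U \<in> {U. A \<subseteq> (\<Union>i. U i) \<and> (\<forall>i. bounded (U i) \<and> diameter (U i) \<le> r0 / 2)}"
    hence cov: "A \<subseteq> (\<Union>i. U i)" and bU: "\<And>i. bounded (U i)" and dU: "\<And>i. diameter (U i) \<le> r0 / 2"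
      by auto
    have "diameter (U i) < r0" for i using dU[of i] r0 by linarith
    hence U: "f ` T \<subseteq> (\<Union>i. U i)" "\<And>i. bounded (U i)" "\<And>i. diameter (U i) < r0"
      using TA cov bU by auto
    have B: "ennreal mT \<le> ennreal C * (\<Sum>i. ennreal (diameter (U i) powr s))"
      using mass_le_cover_sum[OF T(1) U] emT by simp
    show "ennreal (mT / C) \<le> (\<Sum>i. ennreal (diameter (U i) powr s))"
    proof (cases "(\<Sum>i. ennreal (diameter (U i) powr s))" rule: ennreal_cases)
      case (real x)
      hence "mT \<le> C * x" using B C by (simp add: ennreal_mult[symmetric] ennreal_le_iff)
      hence "mT / C \<le> x" using C by (simp add: field_simps)
      thus ?thesis using real by (simp add: ennreal_leI)
    qed simp
  qed
  also have "\<dots> \<le> hausdorff_measure s A"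
    unfolding hausdorff_measure_def by (rule SUP_upper) (use r0 in simp)
  finally have "ennreal (mT / C) \<le> hausdorff_measure s A" .
  moreover have "0 < mT / C" using mT C by simp
  ultimately show ?thesis by (auto simp: ennreal_eq_0_iff)
qed

end

lemma positive_measure_piece:
  fixes G :: "nat \<Rightarrow> 'a set"
  assumes S: "S \<in> sets \<mu>" "emeasure \<mu> S \<noteq> 0" and G: "\<And>N. G N \<in> sets \<mu>" "S \<subseteq> (\<Union>N. G N)"
  obtains N where "emeasure \<mu> (S \<inter> G N) \<noteq> 0"
proof (rule ccontr)
  assume "\<not> thesis"
  hence "\<And>N. emeasure \<mu> (S \<inter> G N) = 0" using that by blast
  hence "emeasure \<mu> (\<Union>N. S \<inter> G N) = 0" using S(1) G(1) by (intro emeasure_UN_eq_0) auto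
  moreover have "(\<Union>N. S \<inter> G N) = S" using G(2) by blast
  ultimately show False using S(2) by simp
qed

section \<open>The Lalley-Gatzouras carpet\<close>

lemma open_if_determined_by_prefix:
  fixes A :: "(nat \<Rightarrow> nat \<times> nat) set"
  assumes "\<And>\<omega> \<omega>'. \<omega> \<in> A \<Longrightarrow> (\<forall>k<M. \<omega>' k = \<omega> k) \<Longrightarrow> \<omega>' \<in> A"
  shows "open A"
proof -
  have cyl: "open {\<omega>'::nat \<Rightarrow> nat \<times> nat. \<omega>' k = v}" for k v
  proof -
    obtain i j where v: "v = (i, j)" by (cases v)
    have "{v} = {i} \<times> {j}" using v by auto
    moreover have "open ({i} \<times> {j})" by (rule open_Times) (simp_all add: open_discrete)
    ultimately have ov: "open {v}" by simp
    have "open ((\<lambda>x::nat\<Rightarrow>nat\<times>nat. x k) -` {v})"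
      by (rule open_vimage[OF ov continuous_on_product_coordinates])
    thus ?thesis by (simp add: vimage_def)
  qed
  have C: "open {\<omega>'. \<forall>k<M. \<omega>' k = \<omega> k}" for \<omega> :: "nat \<Rightarrow> nat \<times> nat"
  proof -
    have "{\<omega>'. \<forall>k<M. \<omega>' k = \<omega> k} = (\<Inter>k\<in>{..<M}. {\<omega>'. \<omega>' k = \<omega> k})" by auto
    thus ?thesis by (simp only:) (intro open_INT finite_lessThan ballI cyl)
  qed
  have eq: "A = (\<Union>\<omega>\<in>A. {\<omega>'. \<forall>k<M. \<omega>' k = \<omega> k})" using assms by auto
  have "open (\<Union>\<omega>\<in>A. {\<omega>'. \<forall>k<M. \<omega>' k = \<omega> k})" using C by (intro open_UN) auto
  thus ?thesis using eq by simp
qed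

lemma digitsD: "(i, j) \<in> digits p m \<Longrightarrow> 1 \<le> i \<and> i \<le> p \<and> 1 \<le> j \<and> j \<le> m i"
  by (simp add: digits_def)

lemma finite_digits: "finite (digits p m)"
proof -
  have "digits p m = (SIGMA i:{1..p}. {1..m i})" by (auto simp: digits_def)
  thus ?thesis by simp
qed

locale lalley_gatzouras =
  fixes p :: nat and m :: "nat \<Rightarrow> nat"
    and a c :: "nat \<Rightarrow> nat \<Rightarrow> real" and b d :: "nat \<Rightarrow> real"
    and \<mu> :: "(nat \<Rightarrow> nat \<times> nat) measure"
  assumes p: "1 \<le> p"
    and m: "\<And>i. 1 \<le> i \<Longrightarrow> i \<le> p \<Longrightarrow> 1 \<le> m i"
    and ab: "\<And>i j. (i, j) \<in> digits p m \<Longrightarrow> 0 < a i j \<and> a i j \<le> b i \<and> b i < 1"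
    and d0: "0 \<le> d 1"
    and dmono: "\<And>i. 1 \<le> i \<Longrightarrow> i < p \<Longrightarrow> d i \<le> d (Suc i)"
    and dp: "d p < 1"
    and dgap: "\<And>i. 1 \<le> i \<Longrightarrow> i < p \<Longrightarrow> d (Suc i) - d i \<ge> b i"
    and bdp: "b p + d p \<le> 1"
    and c0: "\<And>i. 1 \<le> i \<Longrightarrow> i \<le> p \<Longrightarrow> 0 \<le> c i 1"
    and cmono: "\<And>i j. 1 \<le> i \<Longrightarrow> i \<le> p \<Longrightarrow> 1 \<le> j \<Longrightarrow> j < m i \<Longrightarrow> c i j \<le> c i (Suc j)"
    and cm: "\<And>i. 1 \<le> i \<Longrightarrow> i \<le> p \<Longrightarrow> c i (m i) < 1"
    and cgap: "\<And>i j. 1 \<le> i \<Longrightarrow> i \<le> p \<Longrightarrow> 1 \<le> j \<Longrightarrow> j < m i \<Longrightarrow> c i (Suc j) - c i j \<ge> a i j"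
    and acm: "\<And>i. 1 \<le> i \<Longrightarrow> i \<le> p \<Longrightarrow> a i (m i) + c i (m i) \<le> 1"
    and fin: "finite_measure \<mu>"
    and borel_mu: "sets \<mu> = sets (restrict_space borel (SigmaLG p m))"
begin

abbreviation "D \<equiv> digits p m"
abbreviation "Sg \<equiv> SigmaLG p m"
abbreviation "coding \<equiv> piLG a b c d"
abbreviation "B \<equiv> Bset p m a b"
abbreviation "L \<equiv> Lfun a b"

definition hratio :: "(nat \<Rightarrow> nat \<times> nat) \<Rightarrow> nat \<Rightarrow> real" where "hratio \<omega> k = a (fst (\<omega> k)) (snd (\<omega> k))"
definition hoffset :: "(nat \<Rightarrow> nat \<times> nat) \<Rightarrow> nat \<Rightarrow> real" where "hoffset \<omega> k = c (fst (\<omega> k)) (snd (\<omega> k))"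
definition vratio :: "(nat \<Rightarrow> nat \<times> nat) \<Rightarrow> nat \<Rightarrow> real" where "vratio \<omega> k = b (fst (\<omega> k))"
definition voffset :: "(nat \<Rightarrow> nat \<times> nat) \<Rightarrow> nat \<Rightarrow> real" where "voffset \<omega> k = d (fst (\<omega> k))"

abbreviation "hscale \<omega> \<equiv> width (hratio \<omega>)"
abbreviation "vscale \<omega> \<equiv> width (vratio \<omega>)"
abbreviation "hpoint \<omega> \<equiv> limit_point (hratio \<omega>) (hoffset \<omega>)"
abbreviation "vpoint \<omega> \<equiv> limit_point (vratio \<omega>) (voffset \<omega>)"

definition amin :: real where "amin = Min ((\<lambda>e. a (fst e) (snd e)) ` D)"
definition bmax :: real where "bmax = Max ((\<lambda>e. b (fst e)) ` D)"

lemma one_one: "(1, 1) \<in> D" using p m[of 1] by (simp add: digits_def)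

lemma D_ne: "D \<noteq> {}" using one_one by auto

lemma amin_le: "e \<in> D \<Longrightarrow> amin \<le> a (fst e) (snd e)"
  unfolding amin_def by (rule Min_le) (use finite_digits in auto)

lemma b_le_bmax: "e \<in> D \<Longrightarrow> b (fst e) \<le> bmax"
  unfolding bmax_def by (rule Max_ge) (use finite_digits in auto)

lemma amin_pos: "0 < amin"
proof -
  have "amin \<in> (\<lambda>e. a (fst e) (snd e)) ` D" unfolding amin_def
    by (rule Min_in) (use finite_digits D_ne in auto)
  then obtain e where "e \<in> D" "amin = a (fst e) (snd e)" by auto
  thus ?thesis using ab[of "fst e" "snd e"] by auto
qed

lemma bmax_lt1: "bmax < 1"
proof -
  have "bmax \<in> (\<lambda>e. b (fst e)) ` D" unfolding bmax_def
    by (rule Max_in) (use finite_digits D_ne in auto)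
  then obtain e where "e \<in> D" "bmax = b (fst e)" by auto
  thus ?thesis using ab[of "fst e" "snd e"] by auto
qed

lemma amin_le_bmax: "amin \<le> bmax"
  using amin_le[OF one_one] b_le_bmax[OF one_one] ab[OF one_one] by simp

text \<open>Rows are stacked from bottom to top, and the digits of a row from left to right, with
  disjoint interiors.\<close>
lemma d_le: assumes "1 \<le> i" "i \<le> i'" "i' \<le> p" shows "d i \<le> d i'"
  using assms(2,3)
proof (induction i' rule: dec_induct)
  case (step n) thus ?case using dmono[of n] assms(1) by auto
qed simp

lemma b_pos: "1 \<le> i \<Longrightarrow> i \<le> p \<Longrightarrow> 0 < b i"
  using ab[of i 1] m[of i] by (force simp: digits_def)

lemma d_sep: "1 \<le> i \<Longrightarrow> i < i' \<Longrightarrow> i' \<le> p \<Longrightarrow> d i + b i \<le> d i'"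
  using dgap[of i] d_le[of "Suc i" i'] by auto

lemma d_nonneg: "1 \<le> i \<Longrightarrow> i \<le> p \<Longrightarrow> 0 \<le> d i"
  using d0 d_le[of 1 i] by auto

lemma db_le1: "1 \<le> i \<Longrightarrow> i \<le> p \<Longrightarrow> d i + b i \<le> 1"
proof (cases "i = p")
  case False
  assume "1 \<le> i" "i \<le> p"
  hence "d i + b i \<le> d p" using d_sep[of i p] False by auto
  thus ?thesis using bdp b_pos[of p] p by auto
qed (use bdp in auto)

lemma c_le: assumes "1 \<le> i" "i \<le> p" "1 \<le> j" "j \<le> j'" "j' \<le> m i" shows "c i j \<le> c i j'"
  using assms(4,5)
proof (induction j' rule: dec_induct)
  case (step n) thus ?case using cmono[of i n] assms(1-3) by auto
qed simp

lemma c_sep: "1 \<le> i \<Longrightarrow> i \<le> p \<Longrightarrow> 1 \<le> j \<Longrightarrow> j < j' \<Longrightarrow> j' \<le> m i \<Longrightarrow> c i j + a i j \<le> c i j'"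
  using cgap[of i j] c_le[of i "Suc j" j'] by auto

lemma c_nonneg: "1 \<le> i \<Longrightarrow> i \<le> p \<Longrightarrow> 1 \<le> j \<Longrightarrow> j \<le> m i \<Longrightarrow> 0 \<le> c i j"
  using c0[of i] c_le[of i 1 j] by auto

lemma ca_le1: "1 \<le> i \<Longrightarrow> i \<le> p \<Longrightarrow> 1 \<le> j \<Longrightarrow> j \<le> m i \<Longrightarrow> c i j + a i j \<le> 1"
proof (cases "j = m i")
  case False
  assume "1 \<le> i" "i \<le> p" "1 \<le> j" "j \<le> m i"
  hence "c i j + a i j \<le> c i (m i)" using c_sep[of i j "m i"] False by auto
  moreover have "0 < a i (m i)" using ab[of i "m i"] \<open>1 \<le> i\<close> \<open>i \<le> p\<close> m[of i] by (auto simp: digits_def)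
  ultimately show ?thesis using acm[of i] \<open>1 \<le> i\<close> \<open>i \<le> p\<close> by auto
qed (use acm[of i] in \<open>auto simp: add.commute\<close>)

lemma Sg_D: "\<omega> \<in> Sg \<Longrightarrow> \<omega> k \<in> D" by (simp add: SigmaLG_def)

lemma affine_horizontal: assumes "\<omega> \<in> Sg" shows "affine_system bmax (hratio \<omega>) (hoffset \<omega>)"
  unfolding affine_system_def
proof (intro conjI allI bmax_lt1)
  fix k
  obtain i j where e: "\<omega> k = (i, j)" by (cases "\<omega> k")
  have ij: "(i, j) \<in> D" using Sg_D[OF assms, of k] e by simp
  note dd = digitsD[OF ij]
  show "0 < hratio \<omega> k" "hratio \<omega> k \<le> bmax" "0 \<le> hoffset \<omega> k" "hoffset \<omega> k + hratio \<omega> k \<le> 1"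
    using ab[OF ij] b_le_bmax[OF ij] c_nonneg[of i j] ca_le1[of i j] dd e
    by (auto simp: hratio_def hoffset_def)
qed

lemma affine_vertical: assumes "\<omega> \<in> Sg" shows "affine_system bmax (vratio \<omega>) (voffset \<omega>)"
  unfolding affine_system_def
proof (intro conjI allI bmax_lt1)
  fix k
  obtain i j where e: "\<omega> k = (i, j)" by (cases "\<omega> k")
  have ij: "(i, j) \<in> D" using Sg_D[OF assms, of k] e by simp
  note dd = digitsD[OF ij]
  show "0 < vratio \<omega> k" "vratio \<omega> k \<le> bmax" "0 \<le> voffset \<omega> k" "voffset \<omega> k + vratio \<omega> k \<le> 1"
    using ab[OF ij] b_le_bmax[OF ij] d_nonneg[of i] db_le1[of i] dd e
    by (auto simp: vratio_def voffset_def)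
qed

lemma cylmap_eq: "cylmap a b c d \<omega> n (x, y) =
   (left_end (hratio \<omega>) (hoffset \<omega>) n + hscale \<omega> n * x, left_end (vratio \<omega>) (voffset \<omega>) n + vscale \<omega> n * y)"
proof (induction n arbitrary: x y)
  case (Suc n)
  show ?case by (simp add: Suc LGmap_def left_end_Suc width_Suc hratio_def hoffset_def vratio_def voffset_def algebra_simps)
qed simp

lemma piLG_eq:
  assumes w: "\<omega> \<in> Sg"
  shows "coding \<omega> = (hpoint \<omega>, vpoint \<omega>)"
  unfolding piLG_def
proof (rule the_equality)
  note gx = affine_horizontal[OF w] and gy = affine_vertical[OF w]
  show "\<forall>n. (hpoint \<omega>, vpoint \<omega>) \<in> cylmap a b c d \<omega> n ` ({0..1} \<times> {0..1})"
  proof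
    fix n
    let ?x = "limit_point (shift n (hratio \<omega>)) (shift n (hoffset \<omega>))"
    let ?y = "limit_point (shift n (vratio \<omega>)) (shift n (voffset \<omega>))"
    have "(?x, ?y) \<in> {0..1} \<times> {0..1}"
      using limit_point_unit[OF affine_system_shift[OF gx]] limit_point_unit[OF affine_system_shift[OF gy]]
      by auto
    moreover have "cylmap a b c d \<omega> n (?x, ?y) = (hpoint \<omega>, vpoint \<omega>)"
      by (simp add: cylmap_eq limit_point_split[OF gx, of n] limit_point_split[OF gy, of n])
    ultimately show "(hpoint \<omega>, vpoint \<omega>) \<in> cylmap a b c d \<omega> n ` ({0..1} \<times> {0..1})"
      by (metis image_eqI)
  qed
  fix z assume z: "\<forall>n. z \<in> cylmap a b c d \<omega> n ` ({0..1} \<times> {0..1})"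
  have in_interval: "left_end r t n \<le> left_end r t n + width r n * x \<and>
      left_end r t n + width r n * x \<le> left_end r t n + width r n"
    if "affine_system bmax r t" "x \<in> {0..1}" for r t x n
    using that width_pos[OF that(1), of n] by (auto simp: mult_left_le)
  have "left_end (hratio \<omega>) (hoffset \<omega>) n \<le> fst z \<and> fst z \<le> left_end (hratio \<omega>) (hoffset \<omega>) n + hscale \<omega> n
    \<and> left_end (vratio \<omega>) (voffset \<omega>) n \<le> snd z \<and> snd z \<le> left_end (vratio \<omega>) (voffset \<omega>) n + vscale \<omega> n"
    for n
  proof -
    obtain x y where xy: "x \<in> {0..1}" "y \<in> {0..1}" "z = cylmap a b c d \<omega> n (x, y)" using z by blast
    show ?thesis using in_interval[OF gx xy(1), of n] in_interval[OF gy xy(2), of n] xy(3)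
      by (simp add: cylmap_eq)
  qed
  hence "fst z = hpoint \<omega>" "snd z = vpoint \<omega>"
    using limit_point_unique[OF gx, of "fst z"] limit_point_unique[OF gy, of "snd z"] by blast+
  thus "z = (hpoint \<omega>, vpoint \<omega>)" by (simp add: prod_eq_iff)
qed

lemma prod_a_eq: "prod_a a \<omega> l = hscale \<omega> l" by (simp add: prod_a_def width_def hratio_def)
lemma prod_b_eq: "prod_b b \<omega> n = vscale \<omega> n" by (simp add: prod_b_def width_def vratio_def)

lemma Lfun_eq: "L \<omega> n = (LEAST l. 1 \<le> l \<and> hscale \<omega> l \<le> vscale \<omega> n)"
  by (simp add: Lfun_def prod_a_eq prod_b_eq)

text \<open>Since a i j \<le> b i, the horizontal scale never exceeds the vertical one.\<close>
lemma hscale_le_vscale: assumes "\<omega> \<in> Sg" shows "hscale \<omega> k \<le> vscale \<omega> k"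
  unfolding width_def
proof (rule prod_mono)
  fix i
  obtain u v where e: "\<omega> i = (u, v)" by (cases "\<omega> i")
  have "(u, v) \<in> D" using Sg_D[OF assms, of i] e by simp
  thus "0 \<le> hratio \<omega> i \<and> hratio \<omega> i \<le> vratio \<omega> i" using ab[of u v] e by (auto simp: hratio_def vratio_def)
qed

lemma hratio_ge: "\<omega> \<in> Sg \<Longrightarrow> amin \<le> hratio \<omega> k"
  using amin_le[OF Sg_D[of \<omega> k]] by (simp add: hratio_def)
lemma vratio_ge: assumes "\<omega> \<in> Sg" shows "amin \<le> vratio \<omega> k"
proof -
  obtain u v where e: "\<omega> k = (u, v)" by (cases "\<omega> k")
  have uv: "(u, v) \<in> D" using Sg_D[OF assms, of k] e by simp
  show ?thesis using ab[OF uv] amin_le[OF uv] e by (simp add: vratio_def)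
qed

lemma L_props: assumes "\<omega> \<in> Sg"
  shows "1 \<le> L \<omega> n" "hscale \<omega> (L \<omega> n) \<le> vscale \<omega> n" "L \<omega> n \<le> max 1 n"
    "\<And>l. 1 \<le> l \<Longrightarrow> l < L \<omega> n \<Longrightarrow> vscale \<omega> n < hscale \<omega> l"
proof -
  let ?P = "\<lambda>l. 1 \<le> l \<and> hscale \<omega> l \<le> vscale \<omega> n"
  have w: "?P (max 1 n)"
    using hscale_le_vscale[OF assms, of "max 1 n"] width_antimono[OF affine_vertical[OF assms], of n "max 1 n"] by auto
  have L: "?P (L \<omega> n)" unfolding Lfun_eq by (rule LeastI[of ?P, OF w])
  thus "1 \<le> L \<omega> n" "hscale \<omega> (L \<omega> n) \<le> vscale \<omega> n" by auto
  show "L \<omega> n \<le> max 1 n" unfolding Lfun_eq by (rule Least_le[of ?P, OF w])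
  fix l assume "1 \<le> l" "l < L \<omega> n"
  hence "\<not> ?P l" using not_less_Least[of l ?P] unfolding Lfun_eq by blast
  thus "vscale \<omega> n < hscale \<omega> l" using \<open>1 \<le> l\<close> by auto
qed

lemma L_ge: assumes "\<omega> \<in> Sg" shows "amin * vscale \<omega> n \<le> hscale \<omega> (L \<omega> n)"
proof (cases "L \<omega> n = 1")
  case True
  have "vscale \<omega> n \<le> 1" using width_le_pow[OF affine_vertical[OF assms], of n] bmax_lt1 amin_pos amin_le_bmax
    by (meson le_less_trans less_imp_le power_le_one order_trans)
  hence "amin * vscale \<omega> n \<le> amin" using amin_pos by (simp add: mult_left_le)
  also have "\<dots> \<le> hscale \<omega> 1" using hratio_ge[OF assms, of 0] by (simp add: width_def)
  finally show ?thesis using True by simp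
next
  case False
  define l where "l = L \<omega> n - 1"
  have l: "L \<omega> n = Suc l" "1 \<le> l" using L_props(1)[OF assms, of n] False by (auto simp: l_def)
  have "vscale \<omega> n < hscale \<omega> l" using L_props(4)[OF assms, of l n] l by simp
  hence "amin * vscale \<omega> n \<le> hratio \<omega> l * hscale \<omega> l"
    using hratio_ge[OF assms, of l] amin_pos width_pos[OF affine_vertical[OF assms], of n]
    by (intro mult_mono) auto
  thus ?thesis using l by (simp add: width_Suc mult.commute)
qed

text \<open>Hence L omega n grows at least linearly in n.\<close>
lemma L_lower: assumes "\<omega> \<in> Sg" shows "amin ^ L \<omega> n \<le> bmax ^ n"
proof -
  have "amin ^ L \<omega> n \<le> hscale \<omega> (L \<omega> n)"
    by (rule width_ge_pow) (use hratio_ge[OF assms] amin_pos in auto)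
  also have "\<dots> \<le> vscale \<omega> n" by (rule L_props(2)[OF assms])
  also have "\<dots> \<le> bmax ^ n" by (rule width_le_pow[OF affine_vertical[OF assms]])
  finally show ?thesis .
qed

lemma L_mono: assumes "\<omega> \<in> Sg" "n \<le> n'" shows "L \<omega> n \<le> L \<omega> n'"
proof -
  let ?P = "\<lambda>l. 1 \<le> l \<and> hscale \<omega> l \<le> vscale \<omega> n"
  have "?P (L \<omega> n')"
    using L_props(1,2)[OF assms(1), of n'] width_antimono[OF affine_vertical[OF assms(1)] assms(2)] by auto
  thus ?thesis unfolding Lfun_eq[of \<omega> n] by (rule Least_le)
qed

lemma rows_eq: assumes "\<And>k. k < n \<Longrightarrow> fst (\<omega>' k) = fst (\<omega> k)"
  shows "vscale \<omega>' n = vscale \<omega> n" "left_end (vratio \<omega>') (voffset \<omega>') n = left_end (vratio \<omega>) (voffset \<omega>) n"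
  by (rule width_cong, simp add: vratio_def assms) (rule left_end_cong, simp add: vratio_def voffset_def assms)

lemma digs_eq: assumes "\<And>k. k < n \<Longrightarrow> \<omega>' k = \<omega> k"
  shows "hscale \<omega>' n = hscale \<omega> n" "left_end (hratio \<omega>') (hoffset \<omega>') n = left_end (hratio \<omega>) (hoffset \<omega>) n"
  by (rule width_cong, simp add: hratio_def assms) (rule left_end_cong, simp add: hratio_def hoffset_def assms)

lemma L_cong: assumes "\<omega> \<in> Sg" "\<And>k. k < M \<Longrightarrow> \<omega>' k = \<omega> k" "L \<omega> n \<le> M"
  "\<And>k. k < n \<Longrightarrow> fst (\<omega>' k) = fst (\<omega> k)"
  shows "L \<omega>' n = L \<omega> n"
  unfolding Lfun_eq
proof (rule Least_cong_bound)
  show "1 \<le> L \<omega> n \<and> hscale \<omega> (L \<omega> n) \<le> vscale \<omega> n"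
    using L_props(1,2)[OF assms(1)] by auto
  show "L \<omega> n \<le> M" by (rule assms(3))
  fix l assume "l \<le> M"
  have "hscale \<omega>' l = hscale \<omega> l" by (rule digs_eq) (use assms(2) \<open>l \<le> M\<close> in auto)
  moreover have "vscale \<omega>' n = vscale \<omega> n" by (rule rows_eq(1)[OF assms(4)])
  ultimately show "(1 \<le> l \<and> hscale \<omega> l \<le> vscale \<omega> n) = (1 \<le> l \<and> hscale \<omega>' l \<le> vscale \<omega>' n)"
    by simp
qed

lemma Bset_sub: "B \<omega> n \<subseteq> Sg" by (auto simp: Bset_def)

lemma Bset_self: "\<omega> \<in> Sg \<Longrightarrow> \<omega> \<in> B \<omega> n" by (auto simp: Bset_def)

lemma Bset_mono: assumes "\<omega> \<in> Sg" "n \<le> n'" shows "B \<omega> n' \<subseteq> B \<omega> n"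
proof
  fix \<omega>' assume "\<omega>' \<in> B \<omega> n'"
  hence h: "\<omega>' \<in> Sg" "\<And>k. k < L \<omega> n' \<Longrightarrow> \<omega>' k = \<omega> k"
    "\<And>k. L \<omega> n' \<le> k \<Longrightarrow> k < n' \<Longrightarrow> fst (\<omega>' k) = fst (\<omega> k)" by (auto simp: Bset_def)
  have LL: "L \<omega> n \<le> L \<omega> n'" by (rule L_mono[OF assms])
  have A: "\<omega>' k = \<omega> k" if "k < L \<omega> n" for k using h(2)[of k] LL that by simp
  have B: "fst (\<omega>' k) = fst (\<omega> k)" if "k < n" for k
  proof (cases "k < L \<omega> n'")
    case True thus ?thesis using h(2) by simp
  next
    case False thus ?thesis using h(3)[of k] that assms(2) by simp
  qed
  show "\<omega>' \<in> B \<omega> n" using h(1) A B by (simp add: Bset_def)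
qed

lemma Bset_cong: assumes "\<omega> \<in> Sg" "\<And>k. k < max 1 n \<Longrightarrow> \<omega>' k = \<omega> k"
  shows "B \<omega>' n = B \<omega> n"
proof -
  have L: "L \<omega>' n = L \<omega> n"
    by (rule L_cong[OF assms(1) assms(2) L_props(3)[OF assms(1)]]) (use assms(2) in auto)
  have e1: "\<omega>' k = \<omega> k" if "k < L \<omega> n" for k
    using assms(2)[of k] L_props(3)[OF assms(1), of n] that by simp
  have e2: "\<omega>' k = \<omega> k" if "k < n" for k using assms(2)[of k] that by simp
  show ?thesis unfolding Bset_def L by (auto simp: e1 e2)
qed

lemma Bset_rows: assumes "\<omega> \<in> Sg" "\<omega>' \<in> B \<omega> n" "k < n" shows "fst (\<omega>' k) = fst (\<omega> k)"
  using assms unfolding Bset_def by (cases "k < L \<omega> n") auto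

lemma Bset_part: assumes "\<omega> \<in> Sg" "\<omega>' \<in> B \<omega> n"
  shows "B \<omega>' n = B \<omega> n"
proof -
  have L: "L \<omega>' n = L \<omega> n"
    by (rule L_cong[OF assms(1) _ order_refl Bset_rows[OF assms]]) (use assms(2) in \<open>auto simp: Bset_def\<close>)
  show ?thesis unfolding Bset_def L using assms(2) Bset_rows[OF assms] by (auto simp: Bset_def)
qed

lemma Bset_close: assumes "\<omega> \<in> Sg" "\<omega>' \<in> B \<omega> n"
  shows "\<bar>fst (coding \<omega>') - fst (coding \<omega>)\<bar> \<le> hscale \<omega> (L \<omega> n)"
    "\<bar>snd (coding \<omega>') - snd (coding \<omega>)\<bar> \<le> vscale \<omega> n"
proof -
  have w: "\<omega>' \<in> Sg" using assms(2) Bset_sub by auto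
  show "\<bar>fst (coding \<omega>') - fst (coding \<omega>)\<bar> \<le> hscale \<omega> (L \<omega> n)"
    unfolding piLG_eq[OF assms(1)] piLG_eq[OF w] fst_conv
    by (rule limit_point_close[OF affine_horizontal[OF assms(1)] affine_horizontal[OF w]]) (use assms(2) in \<open>auto simp: Bset_def hratio_def hoffset_def\<close>)
  show "\<bar>snd (coding \<omega>') - snd (coding \<omega>)\<bar> \<le> vscale \<omega> n"
    unfolding piLG_eq[OF assms(1)] piLG_eq[OF w] snd_conv
    by (rule limit_point_close[OF affine_vertical[OF assms(1)] affine_vertical[OF w]]) (use Bset_rows[OF assms] in \<open>auto simp: vratio_def voffset_def\<close>)
qed

lemma sets_open: "open A \<Longrightarrow> Sg \<inter> A \<in> sets \<mu>"
  unfolding borel_mu sets_restrict_space by auto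

lemma Bset_sets: "B \<omega> n \<in> sets \<mu>"
proof -
  let ?L = "L \<omega> n"
  let ?A = "{\<omega>'. (\<forall>k<?L. \<omega>' k = \<omega> k) \<and> (\<forall>k. ?L \<le> k \<and> k < n \<longrightarrow> fst (\<omega>' k) = fst (\<omega> k))}"
  have "open ?A" by (rule open_if_determined_by_prefix[where M = "?L + n"]) auto
  moreover have "B \<omega> n = Sg \<inter> ?A" by (auto simp: Bset_def)
  ultimately show ?thesis using sets_open by simp
qed


text \<open>The height of an approximate square of positive level is less than 1, so that
  ln (vscale) < 0 and the ratio in loc_ratio turns bounds on the mass into bounds by powers.\<close>
lemma vscale_lt1: assumes "\<omega> \<in> Sg" "1 \<le> n" shows "vscale \<omega> n < 1"
proof -
  have "vscale \<omega> n \<le> bmax ^ n" by (rule width_le_pow[OF affine_vertical[OF assms(1)]])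
  also have "\<dots> \<le> bmax ^ 1" using assms(2) bmax_lt1 amin_pos amin_le_bmax
    by (intro power_decreasing) auto
  finally show ?thesis using bmax_lt1 by simp
qed

lemma mass_ge_of_loc_ratio_lt: assumes w: "\<omega> \<in> Sg" and n: "1 \<le> n" and lt: "loc_ratio \<mu> p m a b \<omega> n < ereal s"
  shows "vscale \<omega> n powr s \<le> measure \<mu> (B \<omega> n)"
proof -
  let ?M = "measure \<mu> (B \<omega> n)" and ?B = "vscale \<omega> n"
  have M0: "?M \<noteq> 0" using lt by (auto simp: loc_ratio_def)
  hence Mpos: "0 < ?M" using measure_nonneg[of \<mu> "B \<omega> n"] by linarith
  have "ln ?M / ln ?B < s" using lt M0 by (simp add: loc_ratio_def prod_b_eq)
  moreover have Bpos: "0 < ?B" by (rule width_pos[OF affine_vertical[OF w]])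
  moreover have "ln ?B < 0" using vscale_lt1[OF w n] Bpos by simp
  ultimately have "s * ln ?B < ln ?M" by (simp add: divide_less_eq mult.commute)
  hence "exp (s * ln ?B) \<le> exp (ln ?M)" by simp
  thus ?thesis using Mpos Bpos by (simp add: powr_def)
qed

lemma mass_le_of_loc_ratio_gt: assumes w: "\<omega> \<in> Sg" and n: "1 \<le> n" and gt: "ereal s < loc_ratio \<mu> p m a b \<omega> n"
  shows "measure \<mu> (B \<omega> n) \<le> vscale \<omega> n powr s"
proof (cases "measure \<mu> (B \<omega> n) = 0")
  case True thus ?thesis by simp
next
  case False
  let ?M = "measure \<mu> (B \<omega> n)" and ?B = "vscale \<omega> n"
  have Mpos: "0 < ?M" using False measure_nonneg[of \<mu> "B \<omega> n"] by linarith
  have "s < ln ?M / ln ?B" using gt False by (simp add: loc_ratio_def prod_b_eq)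
  moreover have Bpos: "0 < ?B" by (rule width_pos[OF affine_vertical[OF w]])
  moreover have "ln ?B < 0" using vscale_lt1[OF w n] Bpos by simp
  ultimately have "ln ?M < s * ln ?B" by (simp add: less_divide_eq mult.commute)
  hence "exp (ln ?M) \<le> exp (s * ln ?B)" by simp
  thus ?thesis using Mpos Bpos by (simp add: powr_def)
qed

lemma coding_in_unit_square: "\<omega> \<in> Sg \<Longrightarrow> coding \<omega> \<in> {0..1} \<times> {0..1}"
  using limit_point_unit[OF affine_horizontal] limit_point_unit[OF affine_vertical] by (simp add: piLG_eq)

lemma bounded_coding_image: assumes "A \<subseteq> Sg" shows "bounded (coding ` A)"
proof (rule bounded_subset[of "{0..1} \<times> {0..1}"])
  show "bounded ({0..1::real} \<times> {0..1::real})" by (intro bounded_Times bounded_closed_interval)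
  show "coding ` A \<subseteq> {0..1} \<times> {0..1}" using assms coding_in_unit_square by blast
qed

lemma diameter_coding_Bset: assumes w: "\<omega> \<in> Sg"
  shows "diameter (coding ` B \<omega> n) \<le> 2 * vscale \<omega> n"
proof (rule diameter_le)
  show "coding ` B \<omega> n \<noteq> {} \<or> 0 \<le> 2 * vscale \<omega> n"
    using width_pos[OF affine_vertical[OF w]] by (simp add: less_imp_le)
  fix x y assume "x \<in> coding ` B \<omega> n" "y \<in> coding ` B \<omega> n"
  then obtain w1 w2 where ww: "w1 \<in> B \<omega> n" "w2 \<in> B \<omega> n"
    "x = coding w1" "y = coding w2" by auto
  have w1: "w1 \<in> Sg" using ww(1) Bset_sub by auto
  have eq: "B w1 n = B \<omega> n" by (rule Bset_part[OF w ww(1)])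
  have w2: "w2 \<in> B w1 n" using ww(2) eq by simp
  note cl = Bset_close[OF w1 w2]
  have "hscale w1 (L w1 n) \<le> vscale w1 n" by (rule L_props(2)[OF w1])
  moreover have "vscale w1 n = vscale \<omega> n" by (rule rows_eq(1)) (use Bset_rows[OF w ww(1)] in auto)
  ultimately have "\<bar>fst (x - y)\<bar> \<le> vscale \<omega> n" "\<bar>snd (x - y)\<bar> \<le> vscale \<omega> n"
    using cl ww(3,4) by (simp_all add: abs_minus_commute)
  thus "norm (x - y) \<le> 2 * vscale \<omega> n" using norm_pair_le[of "x - y"] by simp
qed

text \<open>Approximate squares are determined by their level and a finite prefix, so there are
  countably many of them.\<close>
lemma countable_Bsets: "countable {B \<omega> n | \<omega> n. \<omega> \<in> Sg}"
proof -
  let ?sq = "\<lambda>(n, xs). B (\<lambda>k. if k < length xs then xs ! k else (1, 1)) n"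
  have "B \<omega> n = ?sq (n, map \<omega> [0..<max 1 n])" if "\<omega> \<in> Sg" for \<omega> n
    by (simp, rule Bset_cong[OF that, symmetric]) simp
  hence "{B \<omega> n | \<omega> n. \<omega> \<in> Sg} \<subseteq> ?sq ` UNIV" by blast
  thus ?thesis by (rule countable_subset) simp
qed

section \<open>Upper bound for the dimension\<close>

definition heavy :: "real \<Rightarrow> (nat \<Rightarrow> nat \<times> nat) \<Rightarrow> nat \<Rightarrow> bool" where
  "heavy s \<omega> n \<longleftrightarrow> vscale \<omega> n powr s \<le> measure \<mu> (B \<omega> n)"

lemma heavy_Bset:
  assumes w: "\<omega> \<in> Sg" and w': "\<omega>' \<in> B \<omega> n"
  shows "heavy s \<omega>' n \<longleftrightarrow> heavy s \<omega> n"
proof -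
  have "vscale \<omega>' n = vscale \<omega> n" by (rule rows_eq(1)) (use Bset_rows[OF w w'] in auto)
  thus ?thesis using Bset_part[OF w w'] by (simp add: heavy_def)
qed

definition first_heavy :: "nat \<Rightarrow> real \<Rightarrow> (nat \<Rightarrow> nat \<times> nat) \<Rightarrow> nat" where
  "first_heavy N s \<omega> = (LEAST n. N \<le> n \<and> heavy s \<omega> n)"

lemma first_heavy:
  assumes "\<exists>n\<ge>N. heavy s \<omega> n"
  shows "N \<le> first_heavy N s \<omega>" "heavy s \<omega> (first_heavy N s \<omega>)"
  using LeastI_ex[of "\<lambda>n. N \<le> n \<and> heavy s \<omega> n"] assms unfolding first_heavy_def by auto

text \<open>First heavy squares are nested or disjoint; by minimality, nested ones coincide.\<close>
lemma first_heavy_squares_eq_or_disjoint: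
  assumes w: "\<omega>1 \<in> Sg" "\<omega>2 \<in> Sg" and h: "\<exists>n\<ge>N. heavy s \<omega>1 n" "\<exists>n\<ge>N. heavy s \<omega>2 n"
  defines "Q \<equiv> \<lambda>\<omega>. B \<omega> (first_heavy N s \<omega>)"
  shows "Q \<omega>1 = Q \<omega>2 \<or> Q \<omega>1 \<inter> Q \<omega>2 = {}"
proof -
  have nested: "Q v = Q u" if uv: "u \<in> Sg" "v \<in> Sg" "\<exists>n\<ge>N. heavy s u n" "\<exists>n\<ge>N. heavy s v n"
    and le: "first_heavy N s u \<le> first_heavy N s v" and z: "z \<in> Q u" "z \<in> Q v" for u v z
  proof -
    let ?nu = "first_heavy N s u" and ?nv = "first_heavy N s v"
    have zS: "z \<in> Sg" using z(1) Bset_sub unfolding Q_def by auto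
    have "Q v \<subseteq> Q u"
      using Bset_mono[OF zS le] Bset_part[OF uv(1) z(1)[unfolded Q_def]]
        Bset_part[OF uv(2) z(2)[unfolded Q_def]] unfolding Q_def by simp
    hence vu: "v \<in> B u ?nu" using Bset_self[OF uv(2)] unfolding Q_def by blast
    have "heavy s v ?nu" using heavy_Bset[OF uv(1) vu] first_heavy(2)[OF uv(3)] by simp
    hence "?nv \<le> ?nu" using first_heavy(1)[OF uv(3)] unfolding first_heavy_def by (auto intro: Least_le)
    hence "?nv = ?nu" using le by simp
    thus ?thesis using Bset_part[OF uv(1) vu] unfolding Q_def by simp
  qed
  show ?thesis
  proof (cases "Q \<omega>1 \<inter> Q \<omega>2 = {}")
    case False
    then obtain z where "z \<in> Q \<omega>1" "z \<in> Q \<omega>2" by blast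
    thus ?thesis using nested[of \<omega>1 \<omega>2 z] nested[of \<omega>2 \<omega>1 z] w h
      by (cases "first_heavy N s \<omega>1 \<le> first_heavy N s \<omega>2") auto
  qed simp
qed

lemma heavy_square_diameter:
  assumes w: "\<omega> \<in> Sg" and h: "heavy s1 \<omega> n" and n: "N \<le> n" and s: "0 < s1" "s1 < s2"
  shows "diameter (coding ` B \<omega> n) \<le> 2 * bmax ^ N"
    "diameter (coding ` B \<omega> n) powr s2 \<le> 2 powr s2 * (bmax ^ N) powr (s2 - s1) * measure \<mu> (B \<omega> n)"
proof -
  let ?h = "vscale \<omega> n"
  have hpos: "0 < ?h" by (rule width_pos[OF affine_vertical[OF w]])
  have "bmax ^ n \<le> bmax ^ N"
    using n amin_pos amin_le_bmax bmax_lt1 by (intro power_decreasing) auto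
  hence hN: "?h \<le> bmax ^ N" using width_le_pow[OF affine_vertical[OF w], of n] by linarith
  have dB: "diameter (coding ` B \<omega> n) \<le> 2 * ?h" by (rule diameter_coding_Bset[OF w])
  thus "diameter (coding ` B \<omega> n) \<le> 2 * bmax ^ N" using hN by linarith
  have "diameter (coding ` B \<omega> n) powr s2 \<le> (2 * ?h) powr s2"
    using s dB diameter_ge_0[OF bounded_coding_image[OF Bset_sub]] by (intro powr_mono2) auto
  also have "\<dots> = 2 powr s2 * ?h powr (s2 - s1) * ?h powr s1"
    using hpos by (simp add: powr_mult powr_add[symmetric])
  also have "\<dots> \<le> 2 powr s2 * (bmax ^ N) powr (s2 - s1) * measure \<mu> (B \<omega> n)"
    using h s hpos hN by (intro mult_mono powr_mono2) (auto simp: heavy_def)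
  finally show "diameter (coding ` B \<omega> n) powr s2 \<le> 2 powr s2 * (bmax ^ N) powr (s2 - s1) * measure \<mu> (B \<omega> n)" .
qed

lemma small_level:
  assumes "0 < \<delta>" "0 < e" "0 < \<alpha>" "0 \<le> M"
  obtains N where "2 * bmax ^ N \<le> \<delta>" "2 powr s * (bmax ^ N) powr \<alpha> * M \<le> e"
proof -
  define y where "y = min (\<delta> / 2) ((e / (2 powr s * (M + 1))) powr (1 / \<alpha>))"
  have y: "0 < y" using assms by (simp add: y_def)
  obtain N where N: "bmax ^ N < y" using real_arch_pow_inv[OF y bmax_lt1] by blast
  have b0: "0 \<le> bmax ^ N" using amin_pos amin_le_bmax by simp
  have "(bmax ^ N) powr \<alpha> \<le> ((e / (2 powr s * (M + 1))) powr (1 / \<alpha>)) powr \<alpha>"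
    using N b0 assms by (intro powr_mono2) (auto simp: y_def)
  also have "\<dots> = e / (2 powr s * (M + 1))" using assms by (simp add: powr_powr)
  finally have "2 powr s * (bmax ^ N) powr \<alpha> * M \<le> 2 powr s * (e / (2 powr s * (M + 1))) * M"
    using assms by (intro mult_right_mono mult_left_mono) auto
  also have "\<dots> \<le> e" using assms by (simp add: divide_simps)
  finally have "2 powr s * (bmax ^ N) powr \<alpha> * M \<le> e" .
  moreover have "2 * bmax ^ N \<le> \<delta>" using N by (simp add: y_def)
  ultimately show ?thesis using that by blast
qed

lemma first_heavy_disjoint_cover:
  assumes S: "S \<subseteq> Sg" and freq: "\<And>\<omega>. \<omega> \<in> S \<Longrightarrow> \<exists>n\<ge>N. heavy s \<omega> n"
  shows "\<exists>U :: nat \<Rightarrow> (nat \<Rightarrow> nat \<times> nat) set. disjoint_family U \<and>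
    (\<forall>k. U k = {} \<or> (\<exists>\<omega>\<in>S. U k = B \<omega> (first_heavy N s \<omega>))) \<and> S \<subseteq> (\<Union>k. U k)"
proof -
  define Q where "Q = (\<lambda>\<omega>. B \<omega> (first_heavy N s \<omega>))"
  have cM: "countable (Q ` S)"
    by (rule countable_subset[OF _ countable_Bsets]) (use S in \<open>auto simp: Q_def\<close>)
  have eq_or_disj: "A = A' \<or> A \<inter> A' = {}" if AA': "A \<in> Q ` S" "A' \<in> Q ` S" for A A'
  proof -
    obtain \<omega>1 \<omega>2 where w: "\<omega>1 \<in> S" "\<omega>2 \<in> S" "A = Q \<omega>1" "A' = Q \<omega>2" using AA' by blast
    have "\<omega>1 \<in> Sg" "\<omega>2 \<in> Sg" using w(1,2) S by auto
    thus ?thesis unfolding w(3,4) Q_def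
      by (rule first_heavy_squares_eq_or_disjoint[OF _ _ freq[OF w(1)] freq[OF w(2)]])
  qed
  have "\<exists>U :: nat \<Rightarrow> (nat \<Rightarrow> nat \<times> nat) set.
      disjoint_family U \<and> (\<forall>k. U k \<in> Q ` S \<or> U k = {}) \<and> Q ` S \<subseteq> range U"
    by (rule countable_disjoint_enumeration[OF cM]) (fact eq_or_disj)
  then obtain U :: "nat \<Rightarrow> (nat \<Rightarrow> nat \<times> nat) set"
    where U: "disjoint_family U" "\<forall>k. U k \<in> Q ` S \<or> U k = {}" "Q ` S \<subseteq> range U"
    by blast
  have "S \<subseteq> (\<Union>k. U k)"
  proof
    fix \<omega> assume w: "\<omega> \<in> S"
    have "Q \<omega> \<in> range U" using U(3) w by blast
    then obtain k where k: "U k = Q \<omega>" by auto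
    have "\<omega> \<in> Sg" using S w by auto
    hence "\<omega> \<in> U k" unfolding k Q_def by (rule Bset_self)
    thus "\<omega> \<in> (\<Union>k. U k)" by blast
  qed
  thus ?thesis using U(1,2) unfolding Q_def by blast
qed

lemma hausdorff_measure_zero_if_heavy:
  assumes S: "S \<subseteq> Sg" and s: "0 < s1" "s1 < s2"
    and freq: "\<And>\<omega> N. \<omega> \<in> S \<Longrightarrow> \<exists>n\<ge>N. heavy s1 \<omega> n"
  shows "hausdorff_measure s2 (coding ` S) = 0"
proof (rule hausdorff_measure_zeroI)
  fix \<delta> e :: real assume d: "0 < \<delta>" and e: "0 < e"
  define Mt where "Mt = measure \<mu> (space \<mu>)"
  obtain N where N: "2 * bmax ^ N \<le> \<delta>" "2 powr s2 * (bmax ^ N) powr (s2 - s1) * Mt \<le> e"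
    using small_level[OF d e, of "s2 - s1" Mt s2] s by (auto simp: Mt_def)
  define C where "C = 2 powr s2 * (bmax ^ N) powr (s2 - s1)"
  have "\<exists>n\<ge>N. heavy s1 \<omega> n" if "\<omega> \<in> S" for \<omega> using freq[OF that] .
  from first_heavy_disjoint_cover[OF S this]
  obtain U :: "nat \<Rightarrow> (nat \<Rightarrow> nat \<times> nat) set" where U: "disjoint_family U"
    "\<forall>k. U k = {} \<or> (\<exists>\<omega>\<in>S. U k = B \<omega> (first_heavy N s1 \<omega>))" "S \<subseteq> (\<Union>k. U k)"
    by blast
  have Uk: "U k \<in> sets \<mu> \<and> bounded (coding ` U k) \<and> diameter (coding ` U k) \<le> \<delta> \<and>
      diameter (coding ` U k) powr s2 \<le> C * measure \<mu> (U k)" for k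
  proof (cases "U k = {}")
    case False
    then obtain \<omega> where w: "\<omega> \<in> S" "U k = B \<omega> (first_heavy N s1 \<omega>)" using U(2) by auto
    have wS: "\<omega> \<in> Sg" using w(1) S by auto
    note fh = first_heavy[OF freq[OF w(1), of N]]
    note diam = heavy_square_diameter[OF wS fh(2) fh(1) s]
    have "diameter (coding ` U k) \<le> \<delta>" using diam(1) N(1) unfolding w(2) by linarith
    moreover have "U k \<in> sets \<mu>" "bounded (coding ` U k)"
      unfolding w(2) by (rule Bset_sets, rule bounded_coding_image[OF Bset_sub])
    ultimately show ?thesis using diam(2) unfolding w(2) C_def by simp
  qed (use d in simp)
  have "coding ` S \<subseteq> (\<Union>k. coding ` U k)" using U(3) by blast
  moreover have "U k \<in> sets \<mu>" "bounded (coding ` U k)" "diameter (coding ` U k) \<le> \<delta>"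
    "diameter (coding ` U k) powr s2 \<le> C * measure \<mu> (U k)" for k
    using Uk[of k] by auto
  ultimately have "hausdorff_content s2 \<delta> (coding ` S) \<le> ennreal (C * Mt)"
    unfolding Mt_def by (intro hausdorff_content_disjoint_cover[OF fin U(1)]) (simp_all add: C_def)
  also have "\<dots> \<le> ennreal e" using N(2) unfolding C_def by (rule ennreal_leI)
  finally show "hausdorff_content s2 \<delta> (coding ` S) \<le> ennreal e" .
qed

text \<open>Part (ii): a liminf of the local ratio at most t forces heavy squares for every exponent
  above t, hence dimension at most t.\<close>
theorem dimension_upper_bound:
  assumes t: "0 \<le> t" and S: "S \<subseteq> Sg" and lim: "\<forall>\<omega>\<in>S. liminf (loc_ratio \<mu> p m a b \<omega>) \<le> ereal t"
  shows "hausdorff_dim (coding ` S) \<le> t"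
proof (rule hausdorff_dim_le[OF _ t])
  fix \<epsilon> :: real assume e: "0 < \<epsilon>"
  show "hausdorff_measure (t + \<epsilon>) (coding ` S) = 0"
  proof (rule hausdorff_measure_zero_if_heavy[OF S, of "t + \<epsilon> / 2"])
    show "0 < t + \<epsilon> / 2" "t + \<epsilon> / 2 < t + \<epsilon>" using e t by auto
    fix \<omega> N assume w: "\<omega> \<in> S"
    have "ereal t < ereal (t + \<epsilon> / 2)" using e by simp
    hence "liminf (loc_ratio \<mu> p m a b \<omega>) < ereal (t + \<epsilon> / 2)"
      using lim w by (blast intro: le_less_trans)
    then obtain n where n: "n > max N 1" "loc_ratio \<mu> p m a b \<omega> n < ereal (t + \<epsilon> / 2)"
      using liminf_upper_bound by blast
    have "heavy (t + \<epsilon> / 2) \<omega> n"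
      unfolding heavy_def by (rule mass_ge_of_loc_ratio_lt[OF _ _ n(2)]) (use w S n(1) in auto)
    thus "\<exists>n\<ge>N. heavy (t + \<epsilon> / 2) \<omega> n" using n(1) by (intro exI[of _ n]) auto
  qed
qed

section \<open>Lower bound for the dimension\<close>

definition returns_within :: "(nat \<Rightarrow> nat \<times> nat) \<Rightarrow> nat \<Rightarrow> real \<Rightarrow> bool" where
  "returns_within \<omega> n \<epsilon> \<longleftrightarrow> (\<forall>e\<in>D. \<exists>j. n \<le> j \<and> real j < real n + \<epsilon> * real n \<and> \<omega> j = e)"

lemma digit_returns:
  assumes e: "e \<in> D" and n: "1 \<le> n" and small: "Rmax p m \<omega> n / ereal (real n) < ereal \<epsilon>"
  shows "\<exists>j. n \<le> j \<and> real j < real n + \<epsilon> * real n \<and> \<omega> j = e"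
proof -
  have le: "return_time \<omega> n e \<le> Rmax p m \<omega> n"
    unfolding Rmax_def by (rule Max_ge) (use finite_digits e in auto)
  have npos: "0 < real n" using n by simp
  have ex: "\<exists>k\<ge>n. \<omega> k = e"
  proof (rule ccontr)
    assume "\<not> ?thesis"
    hence "return_time \<omega> n e = \<infinity>" by (simp add: return_time_def)
    hence "Rmax p m \<omega> n = \<infinity>" using le by simp
    thus False using small npos by (simp add: ereal_divide_ereal)
  qed
  let ?j = "LEAST k. n \<le> k \<and> \<omega> k = e"
  have j: "n \<le> ?j" "\<omega> ?j = e" using LeastI_ex[OF ex[unfolded Bex_def]] by auto
  have rt: "return_time \<omega> n e = ereal (real (Suc ?j - n))" using ex by (simp add: return_time_def)
  have "Rmax p m \<omega> n \<noteq> \<infinity>" using small npos by (auto simp: ereal_divide_ereal)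
  moreover have "Rmax p m \<omega> n \<noteq> -\<infinity>" using le rt by auto
  ultimately obtain R where R: "Rmax p m \<omega> n = ereal R" by (cases "Rmax p m \<omega> n") auto
  have "R < \<epsilon> * real n" using small R npos by (simp add: ereal_divide divide_less_eq)
  moreover have "real (Suc ?j - n) \<le> R" using le rt R by simp
  ultimately have "real ?j < real n + \<epsilon> * real n" using j by (simp add: of_nat_diff)
  thus ?thesis using j by blast
qed

lemma returns_within_eventually:
  assumes lim: "(\<lambda>n. Rmax p m \<omega> n / ereal (real n)) \<longlonglongrightarrow> 0" and e: "0 < \<epsilon>"
  shows "eventually (\<lambda>n. returns_within \<omega> n \<epsilon>) sequentially"
proof -
  have "eventually (\<lambda>n. Rmax p m \<omega> n / ereal (real n) < ereal \<epsilon>) sequentially"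
    using order_tendstoD(2)[OF lim] e by (simp add: zero_ereal_def)
  thus ?thesis using eventually_ge_at_top[of 1]
    by eventually_elim (auto simp: returns_within_def intro: digit_returns)
qed

lemma rows_agree_if_close:
  assumes w: "\<omega> \<in> Sg" and w': "\<omega>' \<in> Sg"
    and close: "\<bar>vpoint \<omega>' - vpoint \<omega>\<bar> <
      vscale \<omega> n * min (limit_point (shift n (vratio \<omega>)) (shift n (voffset \<omega>)))
                        (1 - limit_point (shift n (vratio \<omega>)) (shift n (voffset \<omega>)))"
  shows "\<forall>k<n. fst (\<omega>' k) = fst (\<omega> k)"
proof (rule ccontr)
  assume "\<not> ?thesis"
  then obtain K where K: "K < n" "fst (\<omega>' K) \<noteq> fst (\<omega> K)" "\<And>k. k < K \<Longrightarrow> fst (\<omega>' k) = fst (\<omega> k)"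
    using first_difference[of n "\<lambda>k. fst (\<omega>' k)" "\<lambda>k. fst (\<omega> k)"] by blast
  obtain i j i' j' where ij: "\<omega> K = (i, j)" "\<omega>' K = (i', j')" by (cases "\<omega> K", cases "\<omega>' K")
  have dd: "(i, j) \<in> D" "(i', j') \<in> D" using Sg_D[OF w, of K] Sg_D[OF w', of K] ij by auto
  have "i < i' \<or> i' < i" using K(2) ij by auto
  hence apart: "voffset \<omega> K + vratio \<omega> K \<le> voffset \<omega>' K \<or> voffset \<omega>' K + vratio \<omega>' K \<le> voffset \<omega> K"
    using d_sep[of i i'] d_sep[of i' i] digitsD[OF dd(1)] digitsD[OF dd(2)] ij
    by (auto simp: vratio_def voffset_def)
  have agree: "vratio \<omega>' k = vratio \<omega> k \<and> voffset \<omega>' k = voffset \<omega> k" if "k < K" for k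
    using K(3)[OF that] by (simp add: vratio_def voffset_def)
  show False
    using limit_point_separated[OF affine_vertical[OF w] affine_vertical[OF w'] agree K(1) apart] close
    by linarith
qed

lemma digits_agree_if_close:
  assumes w: "\<omega> \<in> Sg" and w': "\<omega>' \<in> Sg" and n: "1 \<le> n"
    and rows: "\<forall>k<n. fst (\<omega>' k) = fst (\<omega> k)"
    and close: "\<bar>hpoint \<omega>' - hpoint \<omega>\<bar> < hscale \<omega> (L \<omega> n) *
      min (limit_point (shift (L \<omega> n) (hratio \<omega>)) (shift (L \<omega> n) (hoffset \<omega>)))
          (1 - limit_point (shift (L \<omega> n) (hratio \<omega>)) (shift (L \<omega> n) (hoffset \<omega>)))"
  shows "\<forall>k<L \<omega> n. \<omega>' k = \<omega> k"
proof (rule ccontr)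
  assume "\<not> ?thesis"
  then obtain K where K: "K < L \<omega> n" "\<omega>' K \<noteq> \<omega> K" "\<And>k. k < K \<Longrightarrow> \<omega>' k = \<omega> k"
    using first_difference[of "L \<omega> n" \<omega>' \<omega>] by blast
  have "K < n" using K(1) L_props(3)[OF w, of n] n by simp
  obtain i j i' j' where ij: "\<omega> K = (i, j)" "\<omega>' K = (i', j')" by (cases "\<omega> K", cases "\<omega>' K")
  have dd: "(i, j) \<in> D" "(i', j') \<in> D" using Sg_D[OF w, of K] Sg_D[OF w', of K] ij by auto
  have "i' = i" using rows \<open>K < n\<close> ij by force
  hence "j < j' \<or> j' < j" using K(2) ij by auto
  hence apart: "hoffset \<omega> K + hratio \<omega> K \<le> hoffset \<omega>' K \<or> hoffset \<omega>' K + hratio \<omega>' K \<le> hoffset \<omega> K"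
    using c_sep[of i j j'] c_sep[of i j' j] digitsD[OF dd(1)] digitsD[OF dd(2)] ij \<open>i' = i\<close>
    by (auto simp: hratio_def hoffset_def)
  have agree: "hratio \<omega>' k = hratio \<omega> k \<and> hoffset \<omega>' k = hoffset \<omega> k" if "k < K" for k
    using K(3)[OF that] by (simp add: hratio_def hoffset_def)
  show False
    using limit_point_separated[OF affine_horizontal[OF w] affine_horizontal[OF w'] agree K(1) apart] close
    by linarith
qed

lemma close_points_in_Bset:
  assumes w: "\<omega> \<in> Sg" and w': "\<omega>' \<in> Sg" and n: "1 \<le> n"
    and hclose: "\<bar>hpoint \<omega>' - hpoint \<omega>\<bar> < hscale \<omega> (L \<omega> n) *
      min (limit_point (shift (L \<omega> n) (hratio \<omega>)) (shift (L \<omega> n) (hoffset \<omega>)))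
          (1 - limit_point (shift (L \<omega> n) (hratio \<omega>)) (shift (L \<omega> n) (hoffset \<omega>)))"
    and vclose: "\<bar>vpoint \<omega>' - vpoint \<omega>\<bar> <
      vscale \<omega> n * min (limit_point (shift n (vratio \<omega>)) (shift n (voffset \<omega>)))
                        (1 - limit_point (shift n (vratio \<omega>)) (shift n (voffset \<omega>)))"
  shows "\<omega>' \<in> B \<omega> n"
proof -
  have rows: "\<forall>k<n. fst (\<omega>' k) = fst (\<omega> k)" by (rule rows_agree_if_close[OF w w' vclose])
  have "\<forall>k<L \<omega> n. \<omega>' k = \<omega> k" by (rule digits_agree_if_close[OF w w' n rows hclose])
  thus ?thesis using w' rows by (auto simp: Bset_def)
qed

lemma two_dimensional_witness:
  assumes "two_dimensional p m"
  obtains i0 where "1 \<le> i0" "i0 \<le> p" "2 \<le> m i0" "2 \<le> p"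
proof -
  from assms obtain i1 j1 j2 i3 j3 i4 j4 where "(i1, j1) \<in> D" "(i1, j2) \<in> D" "j1 \<noteq> j2"
    "(i3, j3) \<in> D" "(i4, j4) \<in> D" "i3 \<noteq> i4"
    unfolding two_dimensional_def by blast
  hence "2 \<le> m i1" "2 \<le> p" "1 \<le> i1" "i1 \<le> p" by (auto simp: digits_def)
  thus ?thesis using that by blast
qed

text \<open>The gaps left by the first two digits of row i0 and by the first two rows: a point whose
  coding continues (after a bounded delay) with these digits keeps this proportional distance
  from the boundary of its interval.\<close>
definition margin :: "nat \<Rightarrow> real" where
  "margin i0 = min (min (c i0 2) (1 - c i0 1 - a i0 1)) (min (d 2) (1 - d 1 - b 1))"

lemma margin_pos:
  assumes i0: "1 \<le> i0" "i0 \<le> p" "2 \<le> m i0" and p2: "2 \<le> p"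
  shows "0 < margin i0"
proof -
  have "(i0, 1) \<in> D" using i0 by (auto simp: digits_def)
  hence "0 < c i0 2" using c_sep[of i0 1 2] c_nonneg[of i0 1] ab i0 by force
  moreover have "0 < 1 - c i0 1 - a i0 1" using c_sep[of i0 1 2] c_le[of i0 2 "m i0"] cm[of i0] i0 by auto
  moreover have "0 < d 2" using d_sep[of 1 2] d_nonneg[of 1] b_pos[of 1] p2 by auto
  moreover have "0 < 1 - d 1 - b 1" using d_sep[of 1 2] d_le[of 2 p] dp p2 by auto
  ultimately show ?thesis by (simp add: margin_def)
qed

lemma amin_unit: "0 < amin" "amin \<le> 1"
  using amin_pos amin_le_bmax bmax_lt1 by auto

lemma horizontal_margin:
  assumes w: "\<omega> \<in> Sg" and i0: "1 \<le> i0" "i0 \<le> p" "2 \<le> m i0"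
    and ret: "returns_within \<omega> l \<epsilon>" and ln: "l \<le> n" and e: "0 < \<epsilon>"
  defines "X \<equiv> limit_point (shift l (hratio \<omega>)) (shift l (hoffset \<omega>))"
  shows "amin powr (\<epsilon> * n) * margin i0 \<le> min X (1 - X)"
proof -
  note sys = affine_system_shift[OF affine_horizontal[OF w], of l]
  have r: "amin \<le> shift l (hratio \<omega>) k" for k unfolding shift_def by (rule hratio_ge[OF w])
  have D: "(i0, 1) \<in> D" "(i0, 2) \<in> D" using i0 by (auto simp: digits_def)
  obtain j1 j2 where j: "l \<le> j1" "real j1 < real l + \<epsilon> * real l" "\<omega> j1 = (i0, 2)"
    "l \<le> j2" "real j2 < real l + \<epsilon> * real l" "\<omega> j2 = (i0, 1)"
    using ret D unfolding returns_within_def by meson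
  have "\<epsilon> * real l \<le> \<epsilon> * real n" using ln e by simp
  hence o: "real (j1 - l) \<le> \<epsilon> * real n" "real (j2 - l) \<le> \<epsilon> * real n" using j by (simp_all add: of_nat_diff)
  have pw: "0 \<le> amin powr (\<epsilon> * real n)" by simp
  have "amin powr (\<epsilon> * n) * margin i0 \<le> amin powr (\<epsilon> * n) * c i0 2"
    "amin powr (\<epsilon> * n) * margin i0 \<le> amin powr (\<epsilon> * n) * (1 - c i0 1 - a i0 1)"
    using pw by (intro mult_left_mono; simp add: margin_def)+
  moreover note limit_point_margin_powr(1)[OF sys r amin_unit o(1)] limit_point_margin_powr(2)[OF sys r amin_unit o(2)]
  ultimately show ?thesis using j by (simp add: X_def shift_def hoffset_def hratio_def)
qed

lemma vertical_margin:
  assumes w: "\<omega> \<in> Sg" and p2: "2 \<le> p" and ret: "returns_within \<omega> n \<epsilon>" and e: "0 < \<epsilon>"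
    and i0: "1 \<le> i0" "i0 \<le> p" "2 \<le> m i0"
  defines "Y \<equiv> limit_point (shift n (vratio \<omega>)) (shift n (voffset \<omega>))"
  shows "amin powr (\<epsilon> * n) * margin i0 \<le> min Y (1 - Y)"
proof -
  note sys = affine_system_shift[OF affine_vertical[OF w], of n]
  have r: "amin \<le> shift n (vratio \<omega>) k" for k unfolding shift_def by (rule vratio_ge[OF w])
  have D: "(1, 1) \<in> D" "(2, 1) \<in> D" using p2 m[of 1] m[of 2] by (auto simp: digits_def)
  obtain j3 j4 where j: "n \<le> j3" "real j3 < real n + \<epsilon> * real n" "\<omega> j3 = (2, 1)"
    "n \<le> j4" "real j4 < real n + \<epsilon> * real n" "\<omega> j4 = (1, 1)"
    using ret D unfolding returns_within_def by meson
  hence o: "real (j3 - n) \<le> \<epsilon> * real n" "real (j4 - n) \<le> \<epsilon> * real n" by (simp_all add: of_nat_diff)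
  have pw: "0 \<le> amin powr (\<epsilon> * real n)" by simp
  have "amin powr (\<epsilon> * n) * margin i0 \<le> amin powr (\<epsilon> * n) * d 2"
    "amin powr (\<epsilon> * n) * margin i0 \<le> amin powr (\<epsilon> * n) * (1 - d 1 - b 1)"
    using pw by (intro mult_left_mono; simp add: margin_def)+
  moreover note limit_point_margin_powr(1)[OF sys r amin_unit o(1)] limit_point_margin_powr(2)[OF sys r amin_unit o(2)]
  ultimately show ?thesis using j by (simp add: Y_def shift_def voffset_def vratio_def)
qed

text \<open>The trade-off between the delay epsilon * n and the exponent eta: with
  epsilon * ln amin = eta * ln bmax, the height to the power eta is at most amin powr (epsilon * n).\<close>
lemma vscale_powr_le:
  assumes w: "\<omega> \<in> Sg" and par: "0 < \<eta>" "\<epsilon> * ln amin = \<eta> * ln bmax"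
  shows "vscale \<omega> n powr \<eta> \<le> amin powr (\<epsilon> * n)"
proof -
  have "amin powr (\<epsilon> * n) = exp (real n * (\<epsilon> * ln amin))" using amin_unit by (simp add: powr_def algebra_simps)
  also have "\<dots> = bmax powr (\<eta> * n)" using par amin_unit amin_le_bmax by (simp add: powr_def algebra_simps)
  also have "\<dots> = (bmax ^ n) powr \<eta>"
    using amin_unit amin_le_bmax by (simp add: powr_realpow[symmetric] powr_powr mult.commute)
  finally have e: "amin powr (\<epsilon> * n) = (bmax ^ n) powr \<eta>" .
  have "vscale \<omega> n \<le> bmax ^ n" by (rule width_le_pow[OF affine_vertical[OF w]])
  hence "vscale \<omega> n powr \<eta> \<le> (bmax ^ n) powr \<eta>"
    using width_pos[OF affine_vertical[OF w], of n] par by (intro powr_mono2) auto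
  thus ?thesis using e by simp
qed

text \<open>The gauge of level k: a ball of radius below it around coding omega stays inside the
  approximate square of level k (under the recurrence hypotheses).\<close>
definition gauge :: "real \<Rightarrow> real \<Rightarrow> (nat \<Rightarrow> nat \<times> nat) \<Rightarrow> nat \<Rightarrow> real" where
  "gauge \<kappa> \<eta> \<omega> k = \<kappa> * amin * vscale \<omega> k powr (1 + \<eta>)"

lemma finite_tall_levels:
  assumes w: "\<omega> \<in> Sg" and y: "0 < y"
  shows "finite {k. y < vscale \<omega> k}"
proof -
  obtain k0 where k0: "bmax ^ k0 < y" using real_arch_pow_inv[OF y bmax_lt1] by blast
  have "vscale \<omega> k < y" if "k0 \<le> k" for k
  proof -
    have "vscale \<omega> k \<le> bmax ^ k" by (rule width_le_pow[OF affine_vertical[OF w]])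
    also have "\<dots> \<le> bmax ^ k0" using that amin_unit amin_le_bmax bmax_lt1 by (intro power_decreasing) auto
    finally show ?thesis using k0 by simp
  qed
  hence "{k. y < vscale \<omega> k} \<subseteq> {..<k0}" by (force simp: not_less[symmetric])
  thus ?thesis by (rule finite_subset) simp
qed

lemma finite_gauge_levels:
  assumes w: "\<omega> \<in> Sg" and pos: "0 < \<kappa>" "0 < \<eta>" "0 < \<rho>"
  shows "finite {k. \<rho> < gauge \<kappa> \<eta> \<omega> k}"
proof -
  define y where "y = (\<rho> / (\<kappa> * amin)) powr (1 / (1 + \<eta>))"
  have "y < vscale \<omega> k" if "\<rho> < gauge \<kappa> \<eta> \<omega> k" for k
  proof -
    have v: "0 < vscale \<omega> k" by (rule width_pos[OF affine_vertical[OF w]])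
    have "\<rho> / (\<kappa> * amin) < vscale \<omega> k powr (1 + \<eta>)"
      using that pos amin_unit by (simp add: gauge_def field_simps)
    hence "y < (vscale \<omega> k powr (1 + \<eta>)) powr (1 / (1 + \<eta>))"
      unfolding y_def using pos amin_unit by (intro powr_less_mono2) auto
    thus ?thesis using v pos by (simp add: powr_powr)
  qed
  hence "{k. \<rho> < gauge \<kappa> \<eta> \<omega> k} \<subseteq> {k. y < vscale \<omega> k}" by blast
  moreover have "0 < y" using pos amin_unit by (simp add: y_def)
  ultimately show ?thesis using finite_tall_levels[OF w] finite_subset by blast
qed

lemma gauge_le_margins:
  assumes w: "\<omega> \<in> Sg" and i0: "1 \<le> i0" "i0 \<le> p" "2 \<le> m i0" and p2: "2 \<le> p" and n: "1 \<le> n"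
    and ret: "returns_within \<omega> (L \<omega> n) \<epsilon>" "returns_within \<omega> n \<epsilon>"
    and par: "0 < \<eta>" "0 < \<epsilon>" "\<epsilon> * ln amin = \<eta> * ln bmax"
  defines "X \<equiv> limit_point (shift (L \<omega> n) (hratio \<omega>)) (shift (L \<omega> n) (hoffset \<omega>))"
    and "Y \<equiv> limit_point (shift n (vratio \<omega>)) (shift n (voffset \<omega>))"
  shows "gauge (margin i0) \<eta> \<omega> n \<le> hscale \<omega> (L \<omega> n) * min X (1 - X)"
    "gauge (margin i0) \<eta> \<omega> n \<le> vscale \<omega> n * min Y (1 - Y)"
proof -
  let ?v = "vscale \<omega> n" and ?a = "amin powr (\<epsilon> * n) * margin i0"
  have v: "0 < ?v" by (rule width_pos[OF affine_vertical[OF w]])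
  have k: "0 < margin i0" by (rule margin_pos[OF i0 p2])
  have "gauge (margin i0) \<eta> \<omega> n = amin * ?v * (?v powr \<eta> * margin i0)"
    using v by (simp add: gauge_def powr_add algebra_simps)
  also have "\<dots> \<le> amin * ?v * ?a"
    using vscale_powr_le[OF w par(1,3), of n] k v amin_unit by (intro mult_left_mono mult_right_mono) auto
  finally have core: "gauge (margin i0) \<eta> \<omega> n \<le> amin * ?v * ?a" .
  have hm: "?a \<le> min X (1 - X)" unfolding X_def
    by (rule horizontal_margin[OF w i0 ret(1) _ par(2)]) (use L_props(3)[OF w, of n] n in simp)
  have vm: "?a \<le> min Y (1 - Y)" unfolding Y_def by (rule vertical_margin[OF w p2 ret(2) par(2) i0])
  have a0: "0 \<le> ?a" using k by simp
  have "amin * ?v * ?a \<le> hscale \<omega> (L \<omega> n) * min X (1 - X)"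
    using L_ge[OF w, of n] hm a0 width_pos[OF affine_horizontal[OF w], of "L \<omega> n"] by (intro mult_mono) auto
  thus "gauge (margin i0) \<eta> \<omega> n \<le> hscale \<omega> (L \<omega> n) * min X (1 - X)" using core by linarith
  have "amin * ?v \<le> ?v" using mult_left_le_one_le[of ?v amin] v amin_unit by simp
  hence "amin * ?v * ?a \<le> ?v * ?a" using a0 by (rule mult_right_mono)
  thus "gauge (margin i0) \<eta> \<omega> n \<le> vscale \<omega> n * min Y (1 - Y)"
    using core mult_left_mono[OF vm, of ?v] v by linarith
qed

lemma ball_in_Bset:
  assumes w: "\<omega> \<in> Sg" and i0: "1 \<le> i0" "i0 \<le> p" "2 \<le> m i0" and p2: "2 \<le> p" and n: "1 \<le> n"
    and ret: "returns_within \<omega> (L \<omega> n) \<epsilon>" "returns_within \<omega> n \<epsilon>"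
    and par: "0 < \<eta>" "0 < \<epsilon>" "\<epsilon> * ln amin = \<eta> * ln bmax"
    and rho: "\<rho> < gauge (margin i0) \<eta> \<omega> n"
  shows "{\<omega>'\<in>Sg. dist (coding \<omega>') (coding \<omega>) \<le> \<rho>} \<subseteq> B \<omega> n"
proof
  fix \<omega>' assume "\<omega>' \<in> {\<omega>'\<in>Sg. dist (coding \<omega>') (coding \<omega>) \<le> \<rho>}"
  hence w': "\<omega>' \<in> Sg" and dist: "dist (coding \<omega>') (coding \<omega>) \<le> \<rho>" by auto
  have "\<bar>hpoint \<omega>' - hpoint \<omega>\<bar> \<le> \<rho>" "\<bar>vpoint \<omega>' - vpoint \<omega>\<bar> \<le> \<rho>"
    using dist_fst_le[of "coding \<omega>'" "coding \<omega>"] dist_snd_le[of "coding \<omega>'" "coding \<omega>"] dist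
    by (simp_all add: piLG_eq[OF w] piLG_eq[OF w'] dist_real_def)
  thus "\<omega>' \<in> B \<omega> n"
    using gauge_le_margins[OF w i0 p2 n ret par] rho by (intro close_points_in_Bset[OF w w' n]) auto
qed

lemma mass_at_last_level:
  assumes w: "\<omega> \<in> Sg" and k: "0 < \<kappa>" and par: "0 < \<eta>" "0 < s" and rho: "0 < \<rho>"
    and last: "gauge \<kappa> \<eta> \<omega> (Suc n) \<le> \<rho>"
    and mass: "measure \<mu> (B \<omega> n) \<le> vscale \<omega> n powr ((1 + \<eta>) * s)"
  shows "measure \<mu> (B \<omega> n) \<le> (\<kappa> * amin powr (2 + \<eta>)) powr (- s) * \<rho> powr s"
proof -
  let ?v = "vscale \<omega> n"
  define K where "K = \<kappa> * amin powr (2 + \<eta>)"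
  have v: "0 < ?v" by (rule width_pos[OF affine_vertical[OF w]])
  have K: "0 < K" using k amin_unit by (simp add: K_def)
  have "amin * ?v \<le> vscale \<omega> (Suc n)"
    using vratio_ge[OF w, of n] v by (simp add: width_Suc mult.commute mult_right_mono)
  hence "(amin * ?v) powr (1 + \<eta>) \<le> vscale \<omega> (Suc n) powr (1 + \<eta>)"
    using amin_unit v par by (intro powr_mono2) auto
  hence "\<kappa> * amin * (amin * ?v) powr (1 + \<eta>) \<le> \<rho>"
    using last k amin_unit by (simp add: gauge_def order_trans[rotated])
  moreover have "\<kappa> * amin * (amin * ?v) powr (1 + \<eta>) = K * ?v powr (1 + \<eta>)"
    using amin_unit v by (simp add: K_def powr_mult powr_add power2_eq_square algebra_simps)
  ultimately have "?v powr (1 + \<eta>) \<le> \<rho> / K" using K by (simp add: field_simps)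
  hence "(?v powr (1 + \<eta>)) powr s \<le> (\<rho> / K) powr s" using par by (intro powr_mono2) auto
  hence "?v powr ((1 + \<eta>) * s) \<le> K powr (- s) * \<rho> powr s"
    using K rho by (simp add: powr_powr powr_divide powr_minus_divide)
  thus ?thesis using mass by (simp add: K_def)
qed

text \<open>Levels above N' have L omega n above N, uniformly in omega (L grows linearly in n).\<close>
lemma L_eventually_large:
  obtains N' where "N \<le> N'" "1 \<le> N'" "\<And>\<omega> n. \<omega> \<in> Sg \<Longrightarrow> N' \<le> n \<Longrightarrow> N \<le> L \<omega> n"
proof
  define \<theta> where "\<theta> = ln bmax / ln amin"
  have la: "ln amin < 0" "ln bmax < 0" using amin_unit amin_le_bmax bmax_lt1 by auto
  hence th: "0 < \<theta>" by (simp add: \<theta>_def divide_neg_neg)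
  define N' where "N' = N + nat \<lceil>real N / \<theta>\<rceil> + 1"
  show "N \<le> N'" "1 \<le> N'" by (simp_all add: N'_def)
  fix \<omega> n assume w: "\<omega> \<in> Sg" and n: "N' \<le> n"
  have "real N / \<theta> \<le> real n" using n unfolding N'_def by linarith
  hence "real N \<le> real n * \<theta>" using th by (simp add: divide_le_eq)
  moreover have "amin ^ L \<omega> n \<le> bmax ^ n" by (rule L_lower[OF w])
  hence "real (L \<omega> n) * ln amin \<le> real n * ln bmax"
    using amin_unit amin_le_bmax by (simp add: ln_realpow[symmetric])
  hence "real n * \<theta> \<le> real (L \<omega> n)" using la by (simp add: \<theta>_def divide_le_eq)
  ultimately show "N \<le> L \<omega> n" by simp
qed

lemma small_ball_mass:
  assumes w: "\<omega> \<in> Sg" and i0: "1 \<le> i0" "i0 \<le> p" "2 \<le> m i0" and p2: "2 \<le> p"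
    and N': "N \<le> N'" "1 \<le> N'" "\<And>n. N' \<le> n \<Longrightarrow> N \<le> L \<omega> n"
    and reg: "\<And>n. N \<le> n \<Longrightarrow> returns_within \<omega> n \<epsilon> \<and> measure \<mu> (B \<omega> n) \<le> vscale \<omega> n powr ((1 + \<eta>) * s)"
    and par: "0 < \<eta>" "0 < \<epsilon>" "\<epsilon> * ln amin = \<eta> * ln bmax" "0 < s"
    and rho: "0 < \<rho>" "\<rho> < margin i0 * amin * (amin ^ N') powr (1 + \<eta>)"
  shows "\<exists>V\<in>sets \<mu>. {\<omega>'\<in>Sg. dist (coding \<omega>') (coding \<omega>) \<le> \<rho>} \<subseteq> V \<and>
           measure \<mu> V \<le> (margin i0 * amin powr (2 + \<eta>)) powr (- s) * \<rho> powr s"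
proof -
  have k: "0 < margin i0" by (rule margin_pos[OF i0 p2])
  have "amin ^ N' \<le> vscale \<omega> N'" by (rule width_ge_pow) (use vratio_ge[OF w] amin_unit in auto)
  hence "(amin ^ N') powr (1 + \<eta>) \<le> vscale \<omega> N' powr (1 + \<eta>)" using par amin_unit by (intro powr_mono2) auto
  hence "margin i0 * amin * (amin ^ N') powr (1 + \<eta>) \<le> gauge (margin i0) \<eta> \<omega> N'"
    unfolding gauge_def using k amin_unit by (intro mult_left_mono) auto
  hence "\<rho> < gauge (margin i0) \<eta> \<omega> N'" using rho by linarith
  then obtain n where n: "N' \<le> n" "\<rho> < gauge (margin i0) \<eta> \<omega> n" "\<not> \<rho> < gauge (margin i0) \<eta> \<omega> (Suc n)"
    using last_occurrence[of "\<lambda>k. \<rho> < gauge (margin i0) \<eta> \<omega> k"] finite_gauge_levels[OF w k par(1) rho(1)]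
    by blast
  have "N \<le> n" "N \<le> L \<omega> n" "1 \<le> n" using n(1) N' by auto
  hence "B \<omega> n \<in> sets \<mu>" "{\<omega>'\<in>Sg. dist (coding \<omega>') (coding \<omega>) \<le> \<rho>} \<subseteq> B \<omega> n"
    "measure \<mu> (B \<omega> n) \<le> (margin i0 * amin powr (2 + \<eta>)) powr (- s) * \<rho> powr s"
    using Bset_sets ball_in_Bset[OF w i0 p2 _ _ _ par(1-3) n(2)] reg
      mass_at_last_level[OF w k par(1,4) rho(1)] n(3) by (auto simp: not_less)
  thus ?thesis by blast
qed

definition regular :: "real \<Rightarrow> real \<Rightarrow> nat \<Rightarrow> (nat \<Rightarrow> nat \<times> nat) set" where
  "regular \<epsilon> s' n = {\<omega> \<in> Sg. returns_within \<omega> n \<epsilon> \<and> measure \<mu> (B \<omega> n) \<le> vscale \<omega> n powr s'}"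

lemma sets_if_determined_by_prefix:
  assumes "A \<subseteq> Sg" "\<And>\<omega> \<omega>'. \<omega> \<in> A \<Longrightarrow> \<omega>' \<in> Sg \<Longrightarrow> (\<forall>k<M. \<omega>' k = \<omega> k) \<Longrightarrow> \<omega>' \<in> A"
  shows "A \<in> sets \<mu>"
proof -
  let ?O = "\<Union>\<omega>\<in>A. {\<omega>'. \<forall>k<M. \<omega>' k = \<omega> k}"
  have "open ?O" by (rule open_if_determined_by_prefix[where M = M]) auto
  hence "Sg \<inter> ?O \<in> sets \<mu>" by (rule sets_open)
  moreover have "A = Sg \<inter> ?O" using assms by auto
  ultimately show ?thesis by simp
qed

lemma regular_measurable:
  assumes e: "0 < \<epsilon>"
  shows "regular \<epsilon> s' n \<in> sets \<mu>"
proof (rule sets_if_determined_by_prefix[where M = "n + nat \<lceil>\<epsilon> * real n\<rceil> + 1"])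
  show "regular \<epsilon> s' n \<subseteq> Sg" by (auto simp: regular_def)
  fix \<omega> \<omega>' assume wA: "\<omega> \<in> regular \<epsilon> s' n" and w': "\<omega>' \<in> Sg"
    and ag: "\<forall>k<n + nat \<lceil>\<epsilon> * real n\<rceil> + 1. \<omega>' k = \<omega> k"
  have w: "\<omega> \<in> Sg" using wA by (simp add: regular_def)
  have "returns_within \<omega>' n \<epsilon>" unfolding returns_within_def
  proof
    fix e assume "e \<in> D"
    then obtain j where j: "n \<le> j" "real j < real n + \<epsilon> * real n" "\<omega> j = e"
      using wA by (auto simp: regular_def returns_within_def)
    have "j < n + nat \<lceil>\<epsilon> * real n\<rceil> + 1" using j(2) e by linarith
    thus "\<exists>j. n \<le> j \<and> real j < real n + \<epsilon> * real n \<and> \<omega>' j = e" using j ag by auto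
  qed
  moreover have "B \<omega>' n = B \<omega> n" by (rule Bset_cong[OF w]) (use ag in auto)
  moreover have "vscale \<omega>' n = vscale \<omega> n" by (rule rows_eq(1)) (use ag in auto)
  ultimately show "\<omega>' \<in> regular \<epsilon> s' n" using wA w' by (simp add: regular_def)
qed

lemma eventually_regular:
  assumes w: "\<omega> \<in> Sg" and lim: "(\<lambda>n. Rmax p m \<omega> n / ereal (real n)) \<longlonglongrightarrow> 0"
    and ratio: "ereal s' < liminf (loc_ratio \<mu> p m a b \<omega>)" and e: "0 < \<epsilon>"
  shows "eventually (\<lambda>n. \<omega> \<in> regular \<epsilon> s' n) sequentially"
proof -
  have "eventually (\<lambda>n. ereal s' < loc_ratio \<mu> p m a b \<omega> n) sequentially"
    by (rule less_LiminfD[OF ratio])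
  with returns_within_eventually[OF lim e] eventually_ge_at_top[of 1]
  show ?thesis by eventually_elim (use w mass_le_of_loc_ratio_gt in \<open>auto simp: regular_def\<close>)
qed

lemma regular_piece:
  assumes S: "S \<subseteq> Sg" "S \<in> sets \<mu>" "0 < emeasure \<mu> S" and e: "0 < \<epsilon>"
    and hyp: "\<And>\<omega>. \<omega> \<in> S \<Longrightarrow> ((\<lambda>n. Rmax p m \<omega> n / ereal (real n)) \<longlonglongrightarrow> 0) \<and>
                   ereal s' < liminf (loc_ratio \<mu> p m a b \<omega>)"
  shows "\<exists>N. emeasure \<mu> (S \<inter> (\<Inter>n\<in>{N..}. regular \<epsilon> s' n)) \<noteq> 0"
proof -
  define G where "G = (\<lambda>N. \<Inter>n\<in>{N..}. regular \<epsilon> s' n)"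
  have G: "G N \<in> sets \<mu>" for N unfolding G_def using regular_measurable[OF e] by auto
  have cov: "S \<subseteq> (\<Union>N. G N)"
  proof
    fix \<omega> assume w: "\<omega> \<in> S"
    have "eventually (\<lambda>n. \<omega> \<in> regular \<epsilon> s' n) sequentially"
      using eventually_regular[OF _ _ _ e] hyp[OF w] w S(1) by blast
    thus "\<omega> \<in> (\<Union>N. G N)" by (auto simp: G_def eventually_sequentially)
  qed
  have "emeasure \<mu> S \<noteq> 0" using S(3) by simp
  then obtain N where "emeasure \<mu> (S \<inter> G N) \<noteq> 0"
    using positive_measure_piece[OF S(2) _ G cov] by blast
  thus ?thesis unfolding G_def by blast
qed

text \<open>If the recurrence condition holds and the local ratio exceeds s' > s on a set of positive
  measure, its image has positive s-dimensional Hausdorff measure: on a piece of positive mass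
  the estimates hold from a common level N on, and the mass distribution principle applies.\<close>
lemma hausdorff_measure_pos:
  assumes td: "two_dimensional p m" and S: "S \<subseteq> Sg" "S \<in> sets \<mu>" "0 < emeasure \<mu> S"
    and s: "0 < s" "s < s'"
    and hyp: "\<And>\<omega>. \<omega> \<in> S \<Longrightarrow> ((\<lambda>n. Rmax p m \<omega> n / ereal (real n)) \<longlonglongrightarrow> 0) \<and>
                   ereal s' < liminf (loc_ratio \<mu> p m a b \<omega>)"
  shows "hausdorff_measure s (coding ` S) \<noteq> 0"
proof -
  obtain i0 where i0: "1 \<le> i0" "i0 \<le> p" "2 \<le> m i0" and p2: "2 \<le> p"
    using two_dimensional_witness[OF td] by blast
  define \<eta> where "\<eta> = s' / s - 1"
  define \<epsilon> where "\<epsilon> = \<eta> * (ln bmax / ln amin)"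
  have la: "ln amin < 0" "ln bmax < 0" using amin_unit amin_le_bmax bmax_lt1 by auto
  hence th: "0 < ln bmax / ln amin" by (simp add: divide_neg_neg)
  have eta: "0 < \<eta>" "s' = (1 + \<eta>) * s" using s by (auto simp: \<eta>_def field_simps)
  have "0 < \<epsilon>" unfolding \<epsilon>_def using eta(1) th by (rule mult_pos_pos)
  hence par: "0 < \<eta>" "0 < \<epsilon>" "\<epsilon> * ln amin = \<eta> * ln bmax" "s' = (1 + \<eta>) * s"
    using eta la by (simp_all add: \<epsilon>_def)
  define G where "G = (\<lambda>N. \<Inter>n\<in>{N..}. regular \<epsilon> s' n)"
  have G: "G N \<in> sets \<mu>" for N unfolding G_def using regular_measurable[OF par(2)] by auto
  obtain N where N: "emeasure \<mu> (S \<inter> G N) \<noteq> 0"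
    using regular_piece[OF S par(2) hyp] unfolding G_def by blast
  obtain N' where N': "N \<le> N'" "1 \<le> N'" "\<And>\<omega> n. \<omega> \<in> Sg \<Longrightarrow> N' \<le> n \<Longrightarrow> N \<le> L \<omega> n"
    using L_eventually_large by blast
  have k: "0 < margin i0" by (rule margin_pos[OF i0 p2])
  show ?thesis
  proof (rule mass_distribution_principle[OF fin s(1)])
    show "0 < (margin i0 * amin powr (2 + \<eta>)) powr - s" using k amin_unit by simp
    show "S \<inter> G N \<in> sets \<mu>" using S(2) G by auto
    show "0 < margin i0 * amin * (amin ^ N') powr (1 + \<eta>)" using k amin_unit by simp
    fix \<omega> \<rho> assume w: "\<omega> \<in> S \<inter> G N" and rho: "0 < \<rho>" "\<rho> < margin i0 * amin * (amin ^ N') powr (1 + \<eta>)"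
    have wS: "\<omega> \<in> Sg" using w S(1) by auto
    have "returns_within \<omega> n \<epsilon> \<and> measure \<mu> (B \<omega> n) \<le> vscale \<omega> n powr ((1 + \<eta>) * s)"
      if "N \<le> n" for n using w that par(4) by (auto simp: G_def regular_def)
    from small_ball_mass[OF wS i0 p2 N'(1,2) N'(3)[OF wS] this par(1-3) s(1) rho]
    obtain V where "V \<in> sets \<mu>" "{\<omega>'\<in>Sg. dist (coding \<omega>') (coding \<omega>) \<le> \<rho>} \<subseteq> V"
      "measure \<mu> V \<le> (margin i0 * amin powr (2 + \<eta>)) powr (- s) * \<rho> powr s" by blast
    moreover have "{y \<in> S \<inter> G N. dist (coding y) (coding \<omega>) \<le> \<rho>} \<subseteq> {\<omega>'\<in>Sg. dist (coding \<omega>') (coding \<omega>) \<le> \<rho>}"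
      using S(1) by blast
    ultimately show "\<exists>V\<in>sets \<mu>. {y \<in> S \<inter> G N. dist (coding y) (coding \<omega>) \<le> \<rho>} \<subseteq> V \<and>
        measure \<mu> V \<le> (margin i0 * amin powr (2 + \<eta>)) powr - s * \<rho> powr s" by blast
  qed (use N in auto)
qed

theorem dimension_lower_bound:
  assumes td: "two_dimensional p m" and S: "S \<subseteq> Sg" "S \<in> sets \<mu>" "0 < emeasure \<mu> S"
    and hyp: "\<forall>\<omega>\<in>S. ((\<lambda>n. Rmax p m \<omega> n / ereal (real n)) \<longlonglongrightarrow> 0) \<and> liminf (loc_ratio \<mu> p m a b \<omega>) \<ge> ereal t"
  shows "t \<le> hausdorff_dim (coding ` S)"
proof (rule hausdorff_dim_ge)
  show "\<exists>s>0. hausdorff_measure s (coding ` S) = 0"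
    using hausdorff_measure_unit_square[of "coding ` S"] S(1) coding_in_unit_square
    by (intro exI[of _ 3]) auto
  fix s assume s: "0 < s" "s < t"
  show "hausdorff_measure s (coding ` S) \<noteq> 0"
  proof (rule hausdorff_measure_pos[OF td S s(1), of "(s + t) / 2"])
    show "s < (s + t) / 2" using s by simp
    fix \<omega> assume w: "\<omega> \<in> S"
    have "ereal ((s + t) / 2) < ereal t" using s by simp
    also have "\<dots> \<le> liminf (loc_ratio \<mu> p m a b \<omega>)" using hyp w by blast
    finally show "((\<lambda>n. Rmax p m \<omega> n / ereal (real n)) \<longlonglongrightarrow> 0) \<and> ereal ((s + t) / 2) < liminf (loc_ratio \<mu> p m a b \<omega>)"
      using hyp w by blast
  qed
qed

end

theorem lemma2p3:
  fixes p :: nat and m :: "nat \<Rightarrow> nat"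
    and a c :: "nat \<Rightarrow> nat \<Rightarrow> real" and b d :: "nat \<Rightarrow> real"
    and \<mu> :: "(nat \<Rightarrow> nat \<times> nat) measure"
  assumes p: "1 \<le> p"
    and m: "\<And>i. 1 \<le> i \<Longrightarrow> i \<le> p \<Longrightarrow> 1 \<le> m i"
    and ab: "\<And>i j. (i, j) \<in> digits p m \<Longrightarrow> 0 < a i j \<and> a i j \<le> b i \<and> b i < 1"
    and d0: "0 \<le> d 1"
    and dmono: "\<And>i. 1 \<le> i \<Longrightarrow> i < p \<Longrightarrow> d i \<le> d (Suc i)"
    and dp: "d p < 1"
    and dgap: "\<And>i. 1 \<le> i \<Longrightarrow> i < p \<Longrightarrow> d (Suc i) - d i \<ge> b i"
    and bdp: "b p + d p \<le> 1"
    and c0: "\<And>i. 1 \<le> i \<Longrightarrow> i \<le> p \<Longrightarrow> 0 \<le> c i 1"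
    and cmono: "\<And>i j. 1 \<le> i \<Longrightarrow> i \<le> p \<Longrightarrow> 1 \<le> j \<Longrightarrow> j < m i \<Longrightarrow> c i j \<le> c i (Suc j)"
    and cm: "\<And>i. 1 \<le> i \<Longrightarrow> i \<le> p \<Longrightarrow> c i (m i) < 1"
    and cgap: "\<And>i j. 1 \<le> i \<Longrightarrow> i \<le> p \<Longrightarrow> 1 \<le> j \<Longrightarrow> j < m i \<Longrightarrow> c i (Suc j) - c i j \<ge> a i j"
    and acm: "\<And>i. 1 \<le> i \<Longrightarrow> i \<le> p \<Longrightarrow> a i (m i) + c i (m i) \<le> 1"
    and fin: "finite_measure \<mu>"
    and borel_mu: "sets \<mu> = sets (restrict_space borel (SigmaLG p m))"
  shows
    "(\<forall>S t. two_dimensional p m \<and> S \<subseteq> SigmaLG p m \<and> S \<in> sets \<mu> \<and> emeasure \<mu> S > 0 \<and>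
        (\<forall>\<omega>\<in>S. ((\<lambda>n. Rmax p m \<omega> n / ereal (real n)) \<longlonglongrightarrow> 0) \<and>
                 liminf (loc_ratio \<mu> p m a b \<omega>) \<ge> ereal t)
        \<longrightarrow> hausdorff_dim (piLG a b c d ` S) \<ge> t)
   \<and> (\<forall>S t. 0 \<le> t \<and> S \<subseteq> SigmaLG p m \<and>
        (\<forall>\<omega>\<in>S. liminf (loc_ratio \<mu> p m a b \<omega>) \<le> ereal t)
        \<longrightarrow> hausdorff_dim (piLG a b c d ` S) \<le> t)"
proof -
  interpret lalley_gatzouras p m a c b d \<mu> by (rule lalley_gatzouras.intro) (fact assms)+
  show ?thesis
  proof (intro conjI allI impI)
    fix S t
    assume "two_dimensional p m \<and> S \<subseteq> SigmaLG p m \<and> S \<in> sets \<mu> \<and> emeasure \<mu> S > 0 \<and>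
        (\<forall>\<omega>\<in>S. ((\<lambda>n. Rmax p m \<omega> n / ereal (real n)) \<longlonglongrightarrow> 0) \<and> liminf (loc_ratio \<mu> p m a b \<omega>) \<ge> ereal t)"
    thus "hausdorff_dim (piLG a b c d ` S) \<ge> t" by (intro dimension_lower_bound) auto
  next
    fix S t
    assume "0 \<le> t \<and> S \<subseteq> SigmaLG p m \<and> (\<forall>\<omega>\<in>S. liminf (loc_ratio \<mu> p m a b \<omega>) \<le> ereal t)"
    thus "hausdorff_dim (piLG a b c d ` S) \<le> t" by (intro dimension_upper_bound) auto
  qed
qed

end
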